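(* Let $(\Sigma,\sigma)$ be a (possibly nodal) symmetric surface and $(V,\varphi)$ a real bundle pair over $(\Sigma,\sigma)$. For every $x\in\Sigma\setminus\Sigma^\sigma$, every open neighborhood $U\subset\Sigma$ of $x$, and every $\Psi\in\mathrm{SL}(V,\varphi)$, there exists a path $\Psi_t$ ($t\in[0,1]$) in $\mathrm{SL}(V,\varphi)$ such that $\Psi_0=\Psi$, $\Psi_1|_x=\mathrm{Id}_{V_x}$, and $\Psi_t=\Psi$ over $\Sigma\setminus(U\cup\sigma(U))$ for all $t$. The same holds with $\mathrm{SL}(V,\varphi)$ replaced by $\mathrm{GL}(V,\varphi)$.
   Context: A symmetric surface $(\Sigma,\sigma)$ is a closed oriented (possibly nodal) surface with an orientation-reversing involution $\sigma$; $\Sigma^\sigma$ is its fixed locus. A real bundle pair $(V,\varphi)$ over $(\Sigma,\sigma)$ is a complex vector bundle $V\to\Sigma$ with a bundle map $\varphi$ covering $\sigma$, anti-complex-linear on fibers, with $\varphi^2=\mathrm{id}$. $\mathrm{GL}(V,\varphi)$ is the group of $\mathbb C$-linear bundle automorphisms of $V$ covering $\mathrm{id}_\Sigma$ and commuting with $\varphi$, and $\mathrm{SL}(V,\varphi)$ the subgroup of those inducing the identity on $\Lambda^{\mathrm{top}}_{\mathbb C}V$. *)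

theory Defs
  imports "HOL-Homology.Homology" "HOL-Combinatorics.Permutations"
begin

definition node_model :: "(complex \<times> complex) set" where
  "node_model = {(z, w). z * w = 0}"

definition smooth_points :: "'a topology \<Rightarrow> 'a set" where
  "smooth_points S = {x \<in> topspace S. \<exists>W. openin S W \<and> x \<in> W \<and>
      (\<exists>D::complex set. open D \<and> subtopology S W homeomorphic_space top_of_set D)}"

definition nodal_surface :: "'a topology \<Rightarrow> bool" where
  "nodal_surface S \<longleftrightarrow> compact_space S \<and> Hausdorff_space S \<and>
     (\<forall>x \<in> topspace S. x \<in> smooth_points S \<or>
        (\<exists>W f. openin S W \<and> x \<in> W \<and>
           homeomorphic_map (subtopology S W) (top_of_set node_model) f \<and> f x = (0, 0)))"

text \<open>Homological orientation of the smooth locus M (a 2-manifold): a locally consistent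
  choice of generators of the local homology groups H_2(M, M - {y}).\<close>
definition orientation :: "'a topology \<Rightarrow> ('a \<Rightarrow> 'a chain set) \<Rightarrow> bool" where
  "orientation S ori \<longleftrightarrow>
     (let M = smooth_points S; X = subtopology S M in
       (\<forall>y \<in> M. ori y \<in> carrier (relative_homology_group 2 X (M - {y})) \<and>
          carrier (relative_homology_group 2 X (M - {y})) =
            range (\<lambda>k::int. pow (relative_homology_group 2 X (M - {y})) (ori y) k)) \<and>
       (\<forall>x \<in> M. \<exists>W. openin X W \<and> x \<in> W \<and>
          (\<exists>c \<in> carrier (relative_homology_group 2 X (M - W)).
             \<forall>y \<in> W. hom_induced 2 X (M - W) X (M - {y}) id c = ori y)))"

definition symmetric_surface :: "'a topology \<Rightarrow> ('a \<Rightarrow> 'a chain set) \<Rightarrow> ('a \<Rightarrow> 'a) \<Rightarrow> bool" where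
  "symmetric_surface S ori \<sigma> \<longleftrightarrow> nodal_surface S \<and> orientation S ori \<and>
     continuous_map S S \<sigma> \<and> (\<forall>x \<in> topspace S. \<sigma> (\<sigma> x) = x) \<and>
     (let M = smooth_points S; X = subtopology S M in
        \<forall>y \<in> M. hom_induced 2 X (M - {y}) X (M - {\<sigma> y}) \<sigma> (ori y) =
                 inv\<^bsub>relative_homology_group 2 X (M - {\<sigma> y})\<^esub> (ori (\<sigma> y)))"

definition fixed_locus :: "'a topology \<Rightarrow> ('a \<Rightarrow> 'a) \<Rightarrow> 'a set" where
  "fixed_locus S \<sigma> = {x \<in> topspace S. \<sigma> x = x}"

text \<open>Model fibre C^n, realised as complex sequences vanishing from index n on
  (with the product topology).\<close>
definition fspace :: "nat \<Rightarrow> (nat \<Rightarrow> complex) set" where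
  "fspace n = {v. \<forall>i\<ge>n. v i = 0}"

definition fiber :: "'b topology \<Rightarrow> ('b \<Rightarrow> 'a) \<Rightarrow> 'a \<Rightarrow> 'b set" where
  "fiber E p x = {e \<in> topspace E. p e = x}"

definition complex_vector_bundle ::
  "'a topology \<Rightarrow> 'b topology \<Rightarrow> ('b \<Rightarrow> 'a) \<Rightarrow> ('b \<Rightarrow> 'b \<Rightarrow> 'b) \<Rightarrow> (complex \<Rightarrow> 'b \<Rightarrow> 'b) \<Rightarrow> bool" where
  "complex_vector_bundle S E p vadd smul \<longleftrightarrow>
     continuous_map E S p \<and> p ` topspace E = topspace S \<and>
     (\<forall>e \<in> topspace E. \<forall>e' \<in> topspace E. p e = p e' \<longrightarrow>
         vadd e e' \<in> topspace E \<and> p (vadd e e') = p e) \<and>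
     (\<forall>e \<in> topspace E. \<forall>a. smul a e \<in> topspace E \<and> p (smul a e) = p e) \<and>
     (\<forall>x \<in> topspace S. \<exists>U n h. openin S U \<and> x \<in> U \<and>
        homeomorphic_map (subtopology E {e \<in> topspace E. p e \<in> U})
                         (prod_topology (subtopology S U) (top_of_set (fspace n))) h \<and>
        (\<forall>e \<in> topspace E. p e \<in> U \<longrightarrow> fst (h e) = p e) \<and>
        (\<forall>e \<in> topspace E. \<forall>e' \<in> topspace E. p e \<in> U \<and> p e = p e' \<longrightarrow>
            snd (h (vadd e e')) = (\<lambda>i. snd (h e) i + snd (h e') i)) \<and>
        (\<forall>e \<in> topspace E. \<forall>a. p e \<in> U \<longrightarrow>
            snd (h (smul a e)) = (\<lambda>i. a * snd (h e) i)))"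

definition real_bundle_pair ::
  "'a topology \<Rightarrow> ('a \<Rightarrow> 'a) \<Rightarrow> 'b topology \<Rightarrow> ('b \<Rightarrow> 'a) \<Rightarrow> ('b \<Rightarrow> 'b \<Rightarrow> 'b) \<Rightarrow>
   (complex \<Rightarrow> 'b \<Rightarrow> 'b) \<Rightarrow> ('b \<Rightarrow> 'b) \<Rightarrow> bool" where
  "real_bundle_pair S \<sigma> E p vadd smul \<phi> \<longleftrightarrow>
     complex_vector_bundle S E p vadd smul \<and> continuous_map E E \<phi> \<and>
     (\<forall>e \<in> topspace E. p (\<phi> e) = \<sigma> (p e) \<and> \<phi> (\<phi> e) = e) \<and>
     (\<forall>e \<in> topspace E. \<forall>e' \<in> topspace E. p e = p e' \<longrightarrow> \<phi> (vadd e e') = vadd (\<phi> e) (\<phi> e')) \<and>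
     (\<forall>e \<in> topspace E. \<forall>a. \<phi> (smul a e) = smul (cnj a) (\<phi> e))"

definition GL_pair ::
  "'b topology \<Rightarrow> ('b \<Rightarrow> 'a) \<Rightarrow> ('b \<Rightarrow> 'b \<Rightarrow> 'b) \<Rightarrow> (complex \<Rightarrow> 'b \<Rightarrow> 'b) \<Rightarrow> ('b \<Rightarrow> 'b) \<Rightarrow> ('b \<Rightarrow> 'b) set" where
  "GL_pair E p vadd smul \<phi> = {\<Psi>. homeomorphic_map E E \<Psi> \<and>
     (\<forall>e \<in> topspace E. p (\<Psi> e) = p e \<and> \<Psi> (\<phi> e) = \<phi> (\<Psi> e)) \<and>
     (\<forall>e \<in> topspace E. \<forall>e' \<in> topspace E. p e = p e' \<longrightarrow> \<Psi> (vadd e e') = vadd (\<Psi> e) (\<Psi> e')) \<and>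
     (\<forall>e \<in> topspace E. \<forall>a. \<Psi> (smul a e) = smul a (\<Psi> e))}"

definition fzero :: "'b topology \<Rightarrow> ('b \<Rightarrow> 'a) \<Rightarrow> (complex \<Rightarrow> 'b \<Rightarrow> 'b) \<Rightarrow> 'a \<Rightarrow> 'b" where
  "fzero E p smul x = smul 0 (SOME e. e \<in> fiber E p x)"

definition lincomb ::
  "'b topology \<Rightarrow> ('b \<Rightarrow> 'a) \<Rightarrow> ('b \<Rightarrow> 'b \<Rightarrow> 'b) \<Rightarrow> (complex \<Rightarrow> 'b \<Rightarrow> 'b) \<Rightarrow> 'a \<Rightarrow> nat \<Rightarrow>
   (nat \<Rightarrow> complex) \<Rightarrow> (nat \<Rightarrow> 'b) \<Rightarrow> 'b" where
  "lincomb E p vadd smul x n c b =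
     fold (\<lambda>i acc. vadd (smul (c i) (b i)) acc) [0..<n] (fzero E p smul x)"

definition fiber_basis ::
  "'b topology \<Rightarrow> ('b \<Rightarrow> 'a) \<Rightarrow> ('b \<Rightarrow> 'b \<Rightarrow> 'b) \<Rightarrow> (complex \<Rightarrow> 'b \<Rightarrow> 'b) \<Rightarrow> 'a \<Rightarrow> nat \<Rightarrow>
   (nat \<Rightarrow> 'b) \<Rightarrow> bool" where
  "fiber_basis E p vadd smul x n b \<longleftrightarrow> (\<forall>i<n. b i \<in> fiber E p x) \<and>
     (\<forall>v \<in> fiber E p x. \<exists>!c. c \<in> fspace n \<and> v = lincomb E p vadd smul x n c b)"

definition coords ::
  "'b topology \<Rightarrow> ('b \<Rightarrow> 'a) \<Rightarrow> ('b \<Rightarrow> 'b \<Rightarrow> 'b) \<Rightarrow> (complex \<Rightarrow> 'b \<Rightarrow> 'b) \<Rightarrow> 'a \<Rightarrow> nat \<Rightarrow>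
   (nat \<Rightarrow> 'b) \<Rightarrow> 'b \<Rightarrow> nat \<Rightarrow> complex" where
  "coords E p vadd smul x n b v = (THE c. c \<in> fspace n \<and> v = lincomb E p vadd smul x n c b)"

definition detn :: "nat \<Rightarrow> (nat \<Rightarrow> nat \<Rightarrow> complex) \<Rightarrow> complex" where
  "detn n M = (\<Sum>q | q permutes {..<n}. of_int (sign q) * (\<Prod>i<n. M i (q i)))"

text \<open>SL(V,\<phi>): elements of GL(V,\<phi>) acting trivially on the top exterior power of each
  fibre, i.e. with fibrewise determinant 1 (computed in any basis of the fibre).\<close>
definition SL_pair ::
  "'a topology \<Rightarrow> 'b topology \<Rightarrow> ('b \<Rightarrow> 'a) \<Rightarrow> ('b \<Rightarrow> 'b \<Rightarrow> 'b) \<Rightarrow> (complex \<Rightarrow> 'b \<Rightarrow> 'b) \<Rightarrow>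
   ('b \<Rightarrow> 'b) \<Rightarrow> ('b \<Rightarrow> 'b) set" where
  "SL_pair S E p vadd smul \<phi> = {\<Psi> \<in> GL_pair E p vadd smul \<phi>.
     \<forall>x \<in> topspace S. \<forall>n b. fiber_basis E p vadd smul x n b \<longrightarrow>
        detn n (\<lambda>i j. coords E p vadd smul x n b (\<Psi> (b j)) i) = 1}"

definition bundle_path :: "'b topology \<Rightarrow> ('b \<Rightarrow> 'b) set \<Rightarrow> (real \<Rightarrow> 'b \<Rightarrow> 'b) \<Rightarrow> bool" where
  "bundle_path E G \<Psi>t \<longleftrightarrow> (\<forall>t \<in> {0..1}. \<Psi>t t \<in> G) \<and>
     continuous_map (prod_topology (top_of_set {0..1}) E) E (\<lambda>(t, e). \<Psi>t t e)"

end

theory Submission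
  imports Defs "Jordan_Normal_Form.Determinant" "HOL-Analysis.Urysohn"
begin

text \<open>Since \<open>x\<close> is not fixed by \<open>\<sigma>\<close>, it has a neighbourhood \<open>U0 \<subseteq> U\<close> over which \<open>V\<close> is
  trivial and which is disjoint from \<open>\<sigma>(U0)\<close>. In the trivialisation, \<open>\<Psi>\<^sup>-\<^sup>1\<close> is given over \<open>x\<close> by
  an invertible matrix \<open>N\<close>, which is joined to the identity by a path \<open>\<gamma>\<close> of invertible matrices
  (of determinant 1 if \<open>\<Psi> \<in> SL(V,\<phi>)\<close>). Choose a cut-off \<open>f\<close> supported in \<open>U0\<close> with \<open>f x = 1\<close> and
  let the bundle automorphism \<open>twist \<gamma> t\<close> act over \<open>y \<in> U0\<close> by the matrix \<open>\<gamma> (t f(y))\<close> and over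
  \<open>\<sigma>(U0)\<close> by its \<open>\<phi>\<close>-conjugate, and trivially elsewhere. Then \<open>\<Psi> \<circ> twist \<gamma> t\<close> commutes with
  \<open>\<phi>\<close>, stays in \<open>GL(V,\<phi>)\<close> (resp. \<open>SL(V,\<phi>)\<close>), equals \<open>\<Psi>\<close> outside \<open>U0 \<union> \<sigma>(U0)\<close> and at
  \<open>t = 0\<close>, and is the identity over \<open>x\<close> at \<open>t = 1\<close>.\<close>

section \<open>Matrices as functions\<close>

text \<open>An \<open>m \<times> m\<close> complex matrix is encoded as a function \<open>nat \<Rightarrow> nat \<Rightarrow> complex\<close> of which only
  the entries below \<open>m\<close> matter, matching \<open>detn\<close> and the model fibre \<open>fspace\<close>.\<close>

definition fmat_one :: "nat \<Rightarrow> nat \<Rightarrow> complex" where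
  "fmat_one i j = (if i = j then 1 else 0)"

definition unit_fvec :: "nat \<Rightarrow> nat \<Rightarrow> complex" where
  "unit_fvec j = (\<lambda>i. if i = j then 1 else 0)"

definition fmat_vec :: "nat \<Rightarrow> (nat \<Rightarrow> nat \<Rightarrow> complex) \<Rightarrow> (nat \<Rightarrow> complex) \<Rightarrow> nat \<Rightarrow> complex" where
  "fmat_vec m A v = (\<lambda>i. if i < m then \<Sum>j<m. A i j * v j else 0)"

definition fmat_mult ::
  "nat \<Rightarrow> (nat \<Rightarrow> nat \<Rightarrow> complex) \<Rightarrow> (nat \<Rightarrow> nat \<Rightarrow> complex) \<Rightarrow> nat \<Rightarrow> nat \<Rightarrow> complex" where
  "fmat_mult m A B = (\<lambda>i j. \<Sum>k<m. A i k * B k j)"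

definition mat_of_fmat :: "nat \<Rightarrow> (nat \<Rightarrow> nat \<Rightarrow> complex) \<Rightarrow> complex mat" where
  "mat_of_fmat m A = mat m m (\<lambda>(i, j). A i j)"

definition fmat_inv :: "nat \<Rightarrow> (nat \<Rightarrow> nat \<Rightarrow> complex) \<Rightarrow> nat \<Rightarrow> nat \<Rightarrow> complex" where
  "fmat_inv m A = (\<lambda>i j. adj_mat (mat_of_fmat m A) $$ (i, j) / detn m A)"

lemma mat_of_fmat_carrier [simp]: "mat_of_fmat m A \<in> carrier_mat m m"
  by (simp add: mat_of_fmat_def)

lemma detn_eq_det: "detn m A = det (mat_of_fmat m A)"
proof -
  have "det (mat_of_fmat m A) = (\<Sum>q | q permutes {0..<m}.
      signof q * (\<Prod>i = 0..<m. mat_of_fmat m A $$ (i, q i)))"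
    by (rule det_def') simp
  also have "\<dots> = (\<Sum>q | q permutes {..<m}. of_int (sign q) * (\<Prod>i<m. A i (q i)))"
  proof (rule sum.cong)
    fix q assume "q \<in> {q. q permutes {..<m}}"
    then have "\<And>i. i < m \<Longrightarrow> q i < m" using permutes_in_image by fastforce
    then show "signof q * (\<Prod>i = 0..<m. mat_of_fmat m A $$ (i, q i)) =
        of_int (sign q) * (\<Prod>i<m. A i (q i))"
      by (auto simp: mat_of_fmat_def atLeast0LessThan intro!: prod.cong)
  qed (simp add: atLeast0LessThan)
  finally show ?thesis by (simp add: detn_def)
qed

lemma detn_cong: "(\<And>i j. i < m \<Longrightarrow> j < m \<Longrightarrow> A i j = B i j) \<Longrightarrow> detn m A = detn m B"
proof -
  assume "\<And>i j. i < m \<Longrightarrow> j < m \<Longrightarrow> A i j = B i j"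
  then have "mat_of_fmat m A = mat_of_fmat m B" by (auto simp: mat_of_fmat_def intro!: eq_matI)
  then show ?thesis by (simp add: detn_eq_det)
qed

lemma detn_0 [simp]: "detn 0 A = 1"
  by (simp add: detn_def)

lemma detn_fmat_mult: "detn m (fmat_mult m A B) = detn m A * detn m B"
proof -
  have "mat_of_fmat m (fmat_mult m A B) = mat_of_fmat m A * mat_of_fmat m B"
    by (rule eq_matI)
      (auto simp: mat_of_fmat_def fmat_mult_def scalar_prod_def atLeast0LessThan intro!: sum.cong)
  then show ?thesis by (simp add: detn_eq_det det_mult[of _ m])
qed

lemma detn_fmat_one [simp]: "detn m fmat_one = 1"
proof -
  have "mat_of_fmat m fmat_one = 1\<^sub>m m"
    by (rule eq_matI) (auto simp: mat_of_fmat_def fmat_one_def)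
  then show ?thesis by (simp add: detn_eq_det)
qed

lemma detn_cnj: "detn m (\<lambda>i j. cnj (A i j)) = cnj (detn m A)"
  by (simp add: detn_def)

lemma detn_scale_row0:
  assumes "0 < m"
  shows "detn m (\<lambda>i j. if i = 0 then a * A i j else A i j) = a * detn m A"
proof -
  have "mat_of_fmat m (\<lambda>i j. if i = 0 then a * A i j else A i j) = multrow 0 a (mat_of_fmat m A)"
    by (rule eq_matI) (auto simp: mat_of_fmat_def mat_multrow_gen_def)
  then show ?thesis using det_multrow[OF assms mat_of_fmat_carrier] by (simp add: detn_eq_det)
qed

lemma sum_unit_fvec: "k < n \<Longrightarrow> (\<Sum>j<n. unit_fvec k j * c j) = c k"
  by (simp add: unit_fvec_def if_distrib[of "\<lambda>x. x * _"] sum.delta sum.delta' cong: if_cong)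

lemma unit_fvec_in_fspace: "j < m \<Longrightarrow> unit_fvec j \<in> fspace m"
  by (auto simp: unit_fvec_def fspace_def)

lemma fspace_eq_sum_unit_fvec: "v \<in> fspace m \<Longrightarrow> (\<lambda>i. \<Sum>j<m. v j * unit_fvec j i) = v"
  by (auto simp: fspace_def unit_fvec_def fun_eq_iff if_distrib[of "\<lambda>x. _ * x"] sum.delta sum.delta'
      cong: if_cong)

lemma fmat_vec_in_fspace [simp]: "fmat_vec m A v \<in> fspace m"
  by (simp add: fmat_vec_def fspace_def)

lemma fmat_vec_unit_fvec: "i < m \<Longrightarrow> j < m \<Longrightarrow> fmat_vec m A (unit_fvec j) i = A i j"
  by (simp add: fmat_vec_def unit_fvec_def if_distrib[of "\<lambda>x. _ * x"] sum.delta sum.delta'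
      cong: if_cong)

lemma fmat_vec_cong:
  "(\<And>i j. i < m \<Longrightarrow> j < m \<Longrightarrow> A i j = B i j) \<Longrightarrow> fmat_vec m A v = fmat_vec m B v"
  by (auto simp: fmat_vec_def intro!: sum.cong)

lemma fmat_vec_fmat_vec: "fmat_vec m A (fmat_vec m B v) = fmat_vec m (fmat_mult m A B) v"
proof
  fix i
  have "(\<Sum>j<m. A i j * (\<Sum>k<m. B j k * v k)) = (\<Sum>k<m. \<Sum>j<m. A i j * B j k * v k)"
    by (subst sum.swap) (simp add: sum_distrib_left mult.assoc)
  then show "fmat_vec m A (fmat_vec m B v) i = fmat_vec m (fmat_mult m A B) v i"
    by (simp add: fmat_vec_def fmat_mult_def sum_distrib_right)
qed

lemma fmat_vec_one: "v \<in> fspace m \<Longrightarrow> fmat_vec m fmat_one v = v"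
  by (auto simp: fmat_vec_def fmat_one_def fspace_def fun_eq_iff if_distrib[of "\<lambda>x. x * _"]
      sum.delta sum.delta' cong: if_cong)

lemma fmat_vec_add: "fmat_vec m A (\<lambda>i. v i + w i) = (\<lambda>i. fmat_vec m A v i + fmat_vec m A w i)"
  by (auto simp: fmat_vec_def distrib_left sum.distrib)

lemma fmat_vec_scale: "fmat_vec m A (\<lambda>i. a * v i) = (\<lambda>i. a * fmat_vec m A v i)"
  by (auto simp: fmat_vec_def sum_distrib_left algebra_simps)

lemma fmat_vec_cnj: "fmat_vec m (\<lambda>i j. cnj (A i j)) (\<lambda>i. cnj (v i)) = (\<lambda>i. cnj (fmat_vec m A v i))"
  by (auto simp: fmat_vec_def)

lemma fmat_mult_one_left: "j < m \<Longrightarrow> fmat_mult m fmat_one A i j = (if i < m then A i j else 0)"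
  by (simp add: fmat_mult_def fmat_one_def if_distrib[of "\<lambda>x. x * _"] sum.delta sum.delta'
      cong: if_cong)

lemma fmat_mult_inv:
  assumes "detn m A \<noteq> 0" "i < m" "j < m"
  shows "fmat_mult m A (fmat_inv m A) i j = fmat_one i j"
    and "fmat_mult m (fmat_inv m A) A i j = fmat_one i j"
proof -
  let ?M = "mat_of_fmat m A" and ?adj = "adj_mat (mat_of_fmat m A)"
  have adj: "?adj \<in> carrier_mat m m" using adj_mat(1)[OF mat_of_fmat_carrier] .
  have "(?M * ?adj) $$ (i, j) = detn m A * fmat_one i j" "(?adj * ?M) $$ (i, j) = detn m A * fmat_one i j"
    using adj_mat(2,3)[OF mat_of_fmat_carrier] assms by (simp_all add: detn_eq_det fmat_one_def)
  moreover have "(?M * ?adj) $$ (i, j) = (\<Sum>k<m. A i k * ?adj $$ (k, j))"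
    "(?adj * ?M) $$ (i, j) = (\<Sum>k<m. ?adj $$ (i, k) * A k j)"
    using assms adj by (auto simp: scalar_prod_def mat_of_fmat_def atLeast0LessThan intro!: sum.cong)
  ultimately show "fmat_mult m A (fmat_inv m A) i j = fmat_one i j"
    "fmat_mult m (fmat_inv m A) A i j = fmat_one i j"
    using assms(1) by (simp_all add: fmat_mult_def fmat_inv_def sum_divide_distrib[symmetric])
qed

lemma continuous_on_detn:
  assumes "\<And>i j. i < m \<Longrightarrow> j < m \<Longrightarrow> continuous_on T (\<lambda>s. A s i j)"
  shows "continuous_on T (\<lambda>s. detn m (A s))"
  unfolding detn_def
proof (intro continuous_intros)
  fix q i assume "q \<in> {q. q permutes {..<m}}" "i \<in> {..<m}"
  moreover then have "q i < m" using permutes_in_image by fastforce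
  ultimately show "continuous_on T (\<lambda>s. A s i (q i))" using assms by auto
qed

text \<open>Continuity of the inverse comes from the cofactor formula for the adjugate.\<close>

lemma continuous_on_fmat_inv:
  assumes "\<And>i j. i < m \<Longrightarrow> j < m \<Longrightarrow> continuous_on T (\<lambda>s. A s i j)"
    and "\<And>s. s \<in> T \<Longrightarrow> detn m (A s) \<noteq> 0" and "i < m" "j < m"
  shows "continuous_on T (\<lambda>s. fmat_inv m (A s) i j)"
proof -
  define minor where "minor s = (\<lambda>k l. A s (if k < j then k else Suc k) (if l < i then l else Suc l))"
    for s
  have "mat_delete (mat_of_fmat m (A s)) j i = mat_of_fmat (m - 1) (minor s)" for s
    by (rule eq_matI) (auto simp: mat_delete_def mat_of_fmat_def minor_def)
  then have "fmat_inv m (A s) i j = (-1) ^ (j + i) * detn (m - 1) (minor s) / detn m (A s)" for s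
    using assms(3,4) by (simp add: fmat_inv_def adj_mat_def cofactor_def mat_of_fmat_def detn_eq_det)
  moreover have "continuous_on T (\<lambda>s. minor s k l)" if "k < m - 1" "l < m - 1" for k l
    using that unfolding minor_def by (auto intro!: assms(1))
  then have "continuous_on T (\<lambda>s. (-1) ^ (j + i) * detn (m - 1) (minor s) / detn m (A s))"
    using assms(2) by (intro continuous_intros continuous_on_detn assms(1)) auto
  ultimately show ?thesis by simp
qed

section \<open>Paths of invertible matrices\<close>

definition det_segment_poly :: "nat \<Rightarrow> (nat \<Rightarrow> nat \<Rightarrow> complex) \<Rightarrow> complex poly" where
  "det_segment_poly m N = (\<Sum>q | q permutes {..<m}. of_int (sign q) *
      (\<Prod>i<m. [:fmat_one i (q i), N i (q i) - fmat_one i (q i):]))"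

lemma poly_det_segment_poly:
  "poly (det_segment_poly m N) w = detn m (\<lambda>i j. (1 - w) * fmat_one i j + w * N i j)"
  by (simp add: det_segment_poly_def detn_def poly_sum poly_prod algebra_simps of_int_poly)

text \<open>The complex line through \<open>1\<close> and \<open>N\<close> meets the singular matrices only in the finitely many
  roots of a nonzero polynomial, and the complement of a finite set in \<open>\<complex>\<close> is path connected.\<close>

lemma invertible_matrix_path:
  assumes N: "detn m N \<noteq> 0"
  obtains \<gamma> :: "real \<Rightarrow> nat \<Rightarrow> nat \<Rightarrow> complex"
  where "\<And>i j. continuous_on {0..1} (\<lambda>s. \<gamma> s i j)" "\<gamma> 0 = fmat_one" "\<gamma> 1 = N"
    "\<And>s. s \<in> {0..1} \<Longrightarrow> detn m (\<gamma> s) \<noteq> 0"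
proof -
  let ?Z = "{w. poly (det_segment_poly m N) w = 0}"
  have P0: "poly (det_segment_poly m N) 0 = 1" by (simp add: poly_det_segment_poly)
  then have "finite ?Z" by (intro poly_roots_finite) auto
  then have "path_connected (- ?Z)"
    by (intro path_connected_complement_countable) (auto simp: countable_finite)
  moreover have "0 \<in> - ?Z" "1 \<in> - ?Z" using P0 N by (auto simp: poly_det_segment_poly)
  ultimately obtain g where g: "path g" "path_image g \<subseteq> - ?Z" "g 0 = 0" "g 1 = 1"
    unfolding path_connected_def pathstart_def pathfinish_def by blast
  show ?thesis
  proof
    show "continuous_on {0..1} (\<lambda>s. (1 - g s) * fmat_one i j + g s * N i j)" for i j
      using continuous_on_path[OF g(1)] by (intro continuous_intros) auto
    show "detn m (\<lambda>i j. (1 - g s) * fmat_one i j + g s * N i j) \<noteq> 0" if "s \<in> {0..1}" for s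
      using g(2) that unfolding path_image_def poly_det_segment_poly[symmetric] by blast
  qed (simp_all add: g(3,4) fun_eq_iff)
qed

text \<open>Dividing the first row by the determinant keeps the endpoints when both have determinant 1.\<close>

lemma unimodular_matrix_path:
  assumes N: "detn m N = 1"
  obtains \<gamma> :: "real \<Rightarrow> nat \<Rightarrow> nat \<Rightarrow> complex"
  where "\<And>i j. continuous_on {0..1} (\<lambda>s. \<gamma> s i j)" "\<gamma> 0 = fmat_one" "\<gamma> 1 = N"
    "\<And>s. s \<in> {0..1} \<Longrightarrow> detn m (\<gamma> s) = 1"
proof -
  have "detn m N \<noteq> 0" using N by simp
  then show ?thesis
  proof (rule invertible_matrix_path)
    fix \<gamma> :: "real \<Rightarrow> nat \<Rightarrow> nat \<Rightarrow> complex"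
    assume \<gamma>: "\<And>i j. continuous_on {0..1} (\<lambda>s. \<gamma> s i j)" "\<gamma> 0 = fmat_one" "\<gamma> 1 = N"
      "\<And>s. s \<in> {0..1} \<Longrightarrow> detn m (\<gamma> s) \<noteq> 0"
    define \<gamma>' where "\<gamma>' s i j = (if i = 0 then inverse (detn m (\<gamma> s)) * \<gamma> s i j else \<gamma> s i j)" for s i j
    show ?thesis
    proof (rule that)
      show "continuous_on {0..1} (\<lambda>s. \<gamma>' s i j)" for i j
        unfolding \<gamma>'_def using continuous_on_detn[OF \<gamma>(1)] \<gamma>(1,4)
        by (cases "i = 0") (auto intro!: continuous_intros)
      show "detn m (\<gamma>' s) = 1" if "s \<in> {0..1}" for s
      proof (cases "m = 0")
        case False
        then show ?thesis
          using detn_scale_row0[of m "inverse (detn m (\<gamma> s))" "\<gamma> s"] \<gamma>(4)[OF that]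
          unfolding \<gamma>'_def by simp
      qed simp
      show "\<gamma>' 0 = fmat_one" unfolding \<gamma>'_def \<gamma>(2) by (simp add: fun_eq_iff)
      show "\<gamma>' 1 = N" unfolding \<gamma>'_def \<gamma>(3) N by (simp add: fun_eq_iff)
    qed
  qed
qed

section \<open>Linear charts of fibres\<close>

lemma fspace_linear_eq_fmat_vec:
  assumes add: "\<And>v w. v \<in> fspace m \<Longrightarrow> w \<in> fspace m \<Longrightarrow> L (\<lambda>i. v i + w i) = (\<lambda>i. L v i + L w i)"
    and scale: "\<And>a v. v \<in> fspace m \<Longrightarrow> L (\<lambda>i. a * v i) = (\<lambda>i. a * L v i)"
    and into: "\<And>v. v \<in> fspace m \<Longrightarrow> L v \<in> fspace m"
    and v: "v \<in> fspace m"
  shows "L v = fmat_vec m (\<lambda>i j. L (unit_fvec j) i) v"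
proof -
  have zero: "(\<lambda>i. 0::complex) \<in> fspace m" by (simp add: fspace_def)
  have partial_sum: "(\<lambda>i. \<Sum>j\<in>J. v j * unit_fvec j i) \<in> fspace m \<and>
      L (\<lambda>i. \<Sum>j\<in>J. v j * unit_fvec j i) = (\<lambda>i. \<Sum>j\<in>J. v j * L (unit_fvec j) i)"
    if "finite J" "J \<subseteq> {..<m}" for J
    using that
  proof (induction J rule: finite_induct)
    case empty
    then show ?case using zero scale[OF zero, of 0] by simp
  next
    case (insert j J)
    then have u: "(\<lambda>i. v j * unit_fvec j i) \<in> fspace m" and j: "j < m"
      by (auto simp: fspace_def unit_fvec_def)
    then show ?case
      using insert add[OF u] scale[OF unit_fvec_in_fspace[OF j], of "v j"]
      by (auto simp: fspace_def)
  qed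
  have "L v = (\<lambda>i. \<Sum>j<m. v j * L (unit_fvec j) i)"
    using partial_sum[of "{..<m}"] fspace_eq_sum_unit_fvec[OF v] by simp
  with into[OF v] show ?thesis
    by (auto simp: fmat_vec_def fspace_def fun_eq_iff mult.commute)
qed

lemma fmat_inverse_pair_dim_eq:
  assumes "\<And>i i'. i < m \<Longrightarrow> i' < m \<Longrightarrow> (\<Sum>j<n. Q i j * R j i') = fmat_one i i'"
    and "\<And>j j'. j < n \<Longrightarrow> j' < n \<Longrightarrow> (\<Sum>i<m. R j i * Q i j') = fmat_one j j'"
  shows "n = m"
proof -
  have "of_nat n = (\<Sum>j<n. fmat_one j j)" by (simp add: fmat_one_def)
  also have "\<dots> = (\<Sum>j<n. \<Sum>i<m. R j i * Q i j)" by (intro sum.cong) (simp_all add: assms(2))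
  also have "\<dots> = (\<Sum>i<m. \<Sum>j<n. Q i j * R j i)"
    by (subst sum.swap) (simp add: mult.commute)
  also have "\<dots> = (\<Sum>i<m. fmat_one i i)" by (intro sum.cong) (simp_all add: assms(1))
  also have "\<dots> = of_nat m" by (simp add: fmat_one_def)
  finally show ?thesis by simp
qed

lemma lincomb_Suc:
  "lincomb E p vadd smul y (Suc n) c b = vadd (smul (c n) (b n)) (lincomb E p vadd smul y n c b)"
  by (simp add: lincomb_def)

lemma fiber_basis_in_fiber: "fiber_basis E p vadd smul y n b \<Longrightarrow> j < n \<Longrightarrow> b j \<in> fiber E p y"
  by (simp add: fiber_basis_def)

lemma fiber_basis_coords:
  assumes "fiber_basis E p vadd smul y n b" "v \<in> fiber E p y"
  shows "coords E p vadd smul y n b v \<in> fspace n"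
    and "v = lincomb E p vadd smul y n (coords E p vadd smul y n b v) b"
  using theI'[OF assms(1)[unfolded fiber_basis_def, THEN conjunct2, rule_format, OF assms(2)]]
  by (simp_all add: coords_def)

lemma coords_eqI:
  assumes "fiber_basis E p vadd smul y n b" "v \<in> fiber E p y"
    and "c \<in> fspace n" "v = lincomb E p vadd smul y n c b"
  shows "coords E p vadd smul y n b v = c"
  using assms unfolding fiber_basis_def coords_def by (auto intro!: the1_equality)

locale fiber_chart =
  fixes E :: "'b topology" and p :: "'b \<Rightarrow> 'a" and vadd :: "'b \<Rightarrow> 'b \<Rightarrow> 'b"
    and smul :: "complex \<Rightarrow> 'b \<Rightarrow> 'b" and y :: 'a and m :: nat and \<tau> :: "'b \<Rightarrow> nat \<Rightarrow> complex"
  assumes vadd_fiber: "\<And>e e'. e \<in> fiber E p y \<Longrightarrow> e' \<in> fiber E p y \<Longrightarrow> vadd e e' \<in> fiber E p y"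
    and smul_fiber: "\<And>a e. e \<in> fiber E p y \<Longrightarrow> smul a e \<in> fiber E p y"
    and chart_vadd: "\<And>e e'. e \<in> fiber E p y \<Longrightarrow> e' \<in> fiber E p y \<Longrightarrow>
      \<tau> (vadd e e') = (\<lambda>i. \<tau> e i + \<tau> e' i)"
    and chart_smul: "\<And>a e. e \<in> fiber E p y \<Longrightarrow> \<tau> (smul a e) = (\<lambda>i. a * \<tau> e i)"
    and chart_bij: "bij_betw \<tau> (fiber E p y) (fspace m)"
begin

abbreviation V where "V \<equiv> fiber E p y"

definition chart_inv :: "(nat \<Rightarrow> complex) \<Rightarrow> 'b" where
  "chart_inv = the_inv_into V \<tau>"

definition chart_matrix :: "('b \<Rightarrow> 'b) \<Rightarrow> nat \<Rightarrow> nat \<Rightarrow> complex" where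
  "chart_matrix L = (\<lambda>i j. \<tau> (L (chart_inv (unit_fvec j))) i)"

lemma chart_in_fspace: "e \<in> V \<Longrightarrow> \<tau> e \<in> fspace m"
  using chart_bij by (auto simp: bij_betw_def)

lemma chart_inj: "e \<in> V \<Longrightarrow> e' \<in> V \<Longrightarrow> \<tau> e = \<tau> e' \<Longrightarrow> e = e'"
  using chart_bij by (auto simp: bij_betw_def inj_on_def)

lemma chart_inv_in_fiber: "w \<in> fspace m \<Longrightarrow> chart_inv w \<in> V"
  unfolding chart_inv_def using chart_bij by (metis bij_betw_def the_inv_into_into order_refl)

lemma chart_chart_inv: "w \<in> fspace m \<Longrightarrow> \<tau> (chart_inv w) = w"
  unfolding chart_inv_def using chart_bij by (metis bij_betw_def f_the_inv_into_f)

lemma chart_inv_chart: "e \<in> V \<Longrightarrow> chart_inv (\<tau> e) = e"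
  unfolding chart_inv_def using chart_bij by (metis bij_betw_def the_inv_into_f_f)

lemma fzero_in_fiber: "fzero E p smul y \<in> V" and chart_fzero: "\<tau> (fzero E p smul y) = (\<lambda>i. 0)"
proof -
  have "V \<noteq> {}" using chart_bij chart_inv_in_fiber[of "\<lambda>i. 0"] by (auto simp: fspace_def)
  then have "(SOME e. e \<in> V) \<in> V" by (simp add: some_in_eq)
  then show "fzero E p smul y \<in> V" "\<tau> (fzero E p smul y) = (\<lambda>i. 0)"
    by (simp_all add: fzero_def smul_fiber chart_smul)
qed

lemma lincomb_in_fiber:
  assumes "\<And>j. j < n \<Longrightarrow> b j \<in> V"
  shows "lincomb E p vadd smul y n c b \<in> V"
    and "\<tau> (lincomb E p vadd smul y n c b) = (\<lambda>i. \<Sum>j<n. c j * \<tau> (b j) i)"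
  using assms
  by (induction n) (simp_all add: lincomb_def fzero_in_fiber chart_fzero,
      simp_all add: lincomb_Suc vadd_fiber smul_fiber chart_vadd chart_smul add.commute)

lemma chart_linear_map:
  assumes into: "\<And>v. v \<in> V \<Longrightarrow> L v \<in> V"
    and add: "\<And>e e'. e \<in> V \<Longrightarrow> e' \<in> V \<Longrightarrow> L (vadd e e') = vadd (L e) (L e')"
    and scale: "\<And>a e. e \<in> V \<Longrightarrow> L (smul a e) = smul a (L e)"
    and v: "v \<in> V"
  shows "\<tau> (L v) = fmat_vec m (chart_matrix L) (\<tau> v)"
proof -
  have inv_add: "chart_inv (\<lambda>i. v i + w i) = vadd (chart_inv v) (chart_inv w)"
    if "v \<in> fspace m" "w \<in> fspace m" for v w
    using that by (intro chart_inj)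
      (auto simp: chart_inv_in_fiber vadd_fiber chart_chart_inv chart_vadd fspace_def)
  have inv_scale: "chart_inv (\<lambda>i. a * v i) = smul a (chart_inv v)" if "v \<in> fspace m" for a v
    using that by (intro chart_inj)
      (auto simp: chart_inv_in_fiber smul_fiber chart_chart_inv chart_smul fspace_def)
  have "\<tau> (L (chart_inv (\<tau> v))) = fmat_vec m (chart_matrix L) (\<tau> v)"
    unfolding chart_matrix_def
    by (rule fspace_linear_eq_fmat_vec)
      (auto simp: inv_add inv_scale add scale into chart_inv_in_fiber chart_vadd chart_smul
        chart_in_fspace v)
  then show ?thesis using v by (simp add: chart_inv_chart)
qed

lemma chart_fiber_basis: "fiber_basis E p vadd smul y m (\<lambda>j. chart_inv (unit_fvec j))"
proof -
  have b: "chart_inv (unit_fvec j) \<in> V" if "j < m" for j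
    using that by (simp add: chart_inv_in_fiber unit_fvec_in_fspace)
  have chart_lc: "\<tau> (lincomb E p vadd smul y m c (\<lambda>j. chart_inv (unit_fvec j))) =
      (\<lambda>i. \<Sum>j<m. c j * unit_fvec j i)" for c
    using lincomb_in_fiber(2)[of m _ c] b by (simp add: chart_chart_inv unit_fvec_in_fspace)
  have "\<exists>!c. c \<in> fspace m \<and> v = lincomb E p vadd smul y m c (\<lambda>j. chart_inv (unit_fvec j))"
    if v: "v \<in> V" for v
  proof (rule ex1I[of _ "\<tau> v"])
    have "\<tau> (lincomb E p vadd smul y m (\<tau> v) (\<lambda>j. chart_inv (unit_fvec j))) = \<tau> v"
      using chart_lc fspace_eq_sum_unit_fvec[OF chart_in_fspace[OF v]] by simp
    then show "\<tau> v \<in> fspace m \<and> v = lincomb E p vadd smul y m (\<tau> v) (\<lambda>j. chart_inv (unit_fvec j))"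
      using chart_inj[OF v lincomb_in_fiber(1)[OF b]] chart_in_fspace[OF v] by simp
  next
    fix c assume "c \<in> fspace m \<and> v = lincomb E p vadd smul y m c (\<lambda>j. chart_inv (unit_fvec j))"
    then show "c = \<tau> v" using chart_lc[of c] fspace_eq_sum_unit_fvec[of c m] by simp
  qed
  with b show ?thesis by (simp add: fiber_basis_def fiber_def)
qed

definition dual_matrix :: "nat \<Rightarrow> (nat \<Rightarrow> 'b) \<Rightarrow> nat \<Rightarrow> nat \<Rightarrow> complex" where
  "dual_matrix n b = (\<lambda>j i. if i < m then coords E p vadd smul y n b (chart_inv (unit_fvec i)) j else 0)"

text \<open>For a fibre basis \<open>b\<close> of length \<open>n\<close>, the \<open>n \<times> m\<close> matrix \<open>dual_matrix n b\<close> is a two-sided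
  inverse of the \<open>m \<times> n\<close> matrix \<open>\<lambda>i j. \<tau> (b j) i\<close>; in particular \<open>n = m\<close>.\<close>

lemma charted_basis_dual_matrix:
  assumes b: "fiber_basis E p vadd smul y n b" and i': "i' < m"
  shows "(\<Sum>j<n. \<tau> (b j) i * dual_matrix n b j i') = fmat_one i i'"
proof -
  note bV = fiber_basis_in_fiber[OF b]
  have "chart_inv (unit_fvec i') = lincomb E p vadd smul y n (\<lambda>j. dual_matrix n b j i') b"
    using fiber_basis_coords(2)[OF b chart_inv_in_fiber[OF unit_fvec_in_fspace[OF i']]] i'
    by (simp add: dual_matrix_def)
  then have "unit_fvec i' = \<tau> (lincomb E p vadd smul y n (\<lambda>j. dual_matrix n b j i') b)"
    using chart_chart_inv[OF unit_fvec_in_fspace[OF i']] by simp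
  then have "unit_fvec i' i = (\<Sum>j<n. dual_matrix n b j i' * \<tau> (b j) i)"
    using lincomb_in_fiber(2)[OF bV] by simp
  then show ?thesis by (simp add: unit_fvec_def fmat_one_def mult.commute)
qed

lemma coords_eq_dual_matrix:
  assumes b: "fiber_basis E p vadd smul y n b" and v: "v \<in> V"
  shows "coords E p vadd smul y n b v = (\<lambda>j. \<Sum>i<m. dual_matrix n b j i * \<tau> v i)"
proof (rule coords_eqI[OF b v])
  note bV = fiber_basis_in_fiber[OF b]
  have "dual_matrix n b j i = 0" if "n \<le> j" for i j
    using that fiber_basis_coords(1)[OF b chart_inv_in_fiber[OF unit_fvec_in_fspace]]
    by (auto simp: dual_matrix_def fspace_def)
  then show "(\<lambda>j. \<Sum>i<m. dual_matrix n b j i * \<tau> v i) \<in> fspace n" by (simp add: fspace_def)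
  let ?c = "\<lambda>j. \<Sum>i<m. dual_matrix n b j i * \<tau> v i"
  have "\<tau> (lincomb E p vadd smul y n ?c b) i0 = \<tau> v i0" for i0
  proof (cases "i0 < m")
    case True
    have "\<tau> (lincomb E p vadd smul y n ?c b) i0 =
        (\<Sum>j<n. \<Sum>i<m. \<tau> v i * (\<tau> (b j) i0 * dual_matrix n b j i))"
      using lincomb_in_fiber(2)[OF bV] by (simp add: sum_distrib_left sum_distrib_right ac_simps)
    also have "\<dots> = (\<Sum>i<m. \<tau> v i * (\<Sum>j<n. \<tau> (b j) i0 * dual_matrix n b j i))"
      by (subst sum.swap) (simp add: sum_distrib_left)
    also have "\<dots> = (\<Sum>i<m. \<tau> v i * fmat_one i0 i)"
      by (intro sum.cong) (simp_all add: charted_basis_dual_matrix[OF b])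
    also have "\<dots> = \<tau> v i0" using True
      by (simp add: fmat_one_def if_distrib[of "\<lambda>x. _ * x"] sum.delta' cong: if_cong)
    finally show ?thesis .
  next
    case False
    then show ?thesis
      using chart_in_fspace[OF lincomb_in_fiber(1)[OF bV]] chart_in_fspace[OF v] by (simp add: fspace_def)
  qed
  then show "v = lincomb E p vadd smul y n ?c b"
    using chart_inj[OF v lincomb_in_fiber(1)[OF bV]] by (simp add: fun_eq_iff)
qed

lemma dual_matrix_charted_basis:
  assumes b: "fiber_basis E p vadd smul y n b" and k: "k < n"
  shows "(\<Sum>i<m. dual_matrix n b j i * \<tau> (b k) i) = fmat_one j k"
proof -
  note bV = fiber_basis_in_fiber[OF b]
  have "\<tau> (lincomb E p vadd smul y n (unit_fvec k) b) = \<tau> (b k)"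
    using k lincomb_in_fiber(2)[OF bV] by (simp add: sum_unit_fvec)
  then have "b k = lincomb E p vadd smul y n (unit_fvec k) b"
    using chart_inj[OF bV[OF k] lincomb_in_fiber(1)[OF bV]] by simp
  then have "coords E p vadd smul y n b (b k) = unit_fvec k"
    using coords_eqI[OF b bV[OF k] unit_fvec_in_fspace[OF k]] by simp
  then show ?thesis using coords_eq_dual_matrix[OF b bV[OF k]]
    by (simp add: fun_eq_iff unit_fvec_def fmat_one_def)
qed

lemma fiber_basis_length:
  assumes b: "fiber_basis E p vadd smul y n b"
  shows "n = m"
  by (rule fmat_inverse_pair_dim_eq[where Q = "\<lambda>i j. \<tau> (b j) i" and R = "dual_matrix n b"])
    (simp_all add: charted_basis_dual_matrix[OF b] dual_matrix_charted_basis[OF b])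

lemma detn_fiber_basis:
  assumes b: "fiber_basis E p vadd smul y n b"
    and into: "\<And>v. v \<in> V \<Longrightarrow> L v \<in> V"
    and L: "\<And>v. v \<in> V \<Longrightarrow> \<tau> (L v) = fmat_vec m G (\<tau> v)"
  shows "detn n (\<lambda>i j. coords E p vadd smul y n b (L (b j)) i) = detn m G"
proof -
  define Q where "Q i j = \<tau> (b j) i" for i j
  note nm = fiber_basis_length[OF b] and bV = fiber_basis_in_fiber[OF b]
  have "coords E p vadd smul y n b (L (b k)) j = fmat_mult m (dual_matrix n b) (fmat_mult m G Q) j k"
    if "k < m" for j k
    using nm coords_eq_dual_matrix[OF b into[OF bV]] L[OF bV] that
    by (simp add: fmat_mult_def fmat_vec_def Q_def sum_distrib_left mult.assoc)
  then have "detn n (\<lambda>i j. coords E p vadd smul y n b (L (b j)) i) =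
      detn m (fmat_mult m (dual_matrix n b) (fmat_mult m G Q))"
    unfolding nm by (intro detn_cong) simp
  also have "\<dots> = detn m G * detn m (fmat_mult m (dual_matrix n b) Q)" by (simp add: detn_fmat_mult)
  also have "detn m (fmat_mult m (dual_matrix n b) Q) = detn m fmat_one"
    using nm by (intro detn_cong) (simp add: fmat_mult_def Q_def dual_matrix_charted_basis[OF b, unfolded nm])
  finally show ?thesis by simp
qed

lemma detn_fiber_basis_comp_unimodular:
  assumes b: "fiber_basis E p vadd smul y n b"
    and P: "\<And>v. v \<in> V \<Longrightarrow> P v \<in> V"
    and P_add: "\<And>e e'. e \<in> V \<Longrightarrow> e' \<in> V \<Longrightarrow> P (vadd e e') = vadd (P e) (P e')"
    and P_scale: "\<And>a e. e \<in> V \<Longrightarrow> P (smul a e) = smul a (P e)"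
    and A: "\<And>v. v \<in> V \<Longrightarrow> A v \<in> V"
    and A_chart: "\<And>v. v \<in> V \<Longrightarrow> \<tau> (A v) = fmat_vec m H (\<tau> v)" and H: "detn m H = 1"
  shows "detn n (\<lambda>i j. coords E p vadd smul y n b (P (A (b j))) i) =
    detn n (\<lambda>i j. coords E p vadd smul y n b (P (b j)) i)"
proof -
  note P_chart = chart_linear_map[OF P P_add P_scale]
  have "detn n (\<lambda>i j. coords E p vadd smul y n b (P (A (b j))) i) =
      detn m (fmat_mult m (chart_matrix P) H)"
    using P A by (intro detn_fiber_basis[OF b]) (auto simp: P_chart A_chart fmat_vec_fmat_vec)
  also have "\<dots> = detn n (\<lambda>i j. coords E p vadd smul y n b (P (b j)) i)"
    using P by (simp add: detn_fmat_mult H detn_fiber_basis[OF b _ P_chart])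
  finally show ?thesis .
qed

end

lemma continuous_map_mult:
  fixes f g :: "'a \<Rightarrow> 'b::real_normed_algebra"
  shows "continuous_map X euclidean f \<Longrightarrow> continuous_map X euclidean g \<Longrightarrow>
    continuous_map X euclidean (\<lambda>x. f x * g x)"
  by (simp add: continuous_map_atin tendsto_mult)

lemma continuous_map_into_fspace:
  assumes "\<And>i. continuous_map X euclidean (\<lambda>x. F x i)" "\<And>x. x \<in> topspace X \<Longrightarrow> F x \<in> fspace m"
  shows "continuous_map X (top_of_set (fspace m)) F"
proof -
  have "continuous_map X (product_topology (\<lambda>i. euclidean) UNIV) F"
    using assms(1) by (simp add: continuous_map_componentwise_UNIV)
  then show ?thesis using assms(2)
    by (auto simp: continuous_map_in_subtopology euclidean_product_topology)
qed

lemma continuous_map_fspace_component: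
  assumes "continuous_map X (top_of_set (fspace m)) F"
  shows "continuous_map X euclidean (\<lambda>x. F x i)"
proof -
  have "continuous_map X (product_topology (\<lambda>i. euclidean) UNIV) F"
    using continuous_map_into_fulltopology[OF assms] by (simp add: euclidean_product_topology)
  then show ?thesis by (simp add: continuous_map_componentwise_UNIV)
qed

lemma continuous_map_fmat_vec:
  assumes "\<And>i j. i < m \<Longrightarrow> j < m \<Longrightarrow> continuous_map X euclidean (\<lambda>z. A z i j)"
    and "continuous_map X (top_of_set (fspace m)) v"
  shows "continuous_map X (top_of_set (fspace m)) (\<lambda>z. fmat_vec m (A z) (v z))"
proof (rule continuous_map_into_fspace)
  show "continuous_map X euclidean (\<lambda>z. fmat_vec m (A z) (v z) i)" for i
  proof (cases "i < m")
    case True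
    then have "continuous_map X euclidean (\<lambda>z. \<Sum>j<m. A z i j * v z j)"
      by (intro continuous_map_sum continuous_map_mult assms(1)
          continuous_map_fspace_component[OF assms(2)]) auto
    then show ?thesis using True by (simp add: fmat_vec_def)
  qed (simp add: fmat_vec_def)
qed simp

lemma continuous_map_compose_continuous_on:
  assumes "continuous_map X (top_of_set T) g" "continuous_on T F"
  shows "continuous_map X euclidean (\<lambda>x. F (g x))"
  using continuous_map_compose[OF assms(1), of euclidean F] assms(2) by (simp add: o_def)

section \<open>Bundle automorphisms and trivialisations\<close>

lemma GL_pair_fiberwise_linear:
  assumes "L \<in> GL_pair E p vadd smul \<phi>"
  shows "\<And>v. v \<in> fiber E p y \<Longrightarrow> L v \<in> fiber E p y"
    and "\<And>e e'. e \<in> fiber E p y \<Longrightarrow> e' \<in> fiber E p y \<Longrightarrow> L (vadd e e') = vadd (L e) (L e')"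
    and "\<And>a e. e \<in> fiber E p y \<Longrightarrow> L (smul a e) = smul a (L e)"
  using assms by (auto simp: GL_pair_def fiber_def continuous_map_def Pi_iff
      dest!: homeomorphic_imp_continuous_map)

lemma GL_pair_inverse:
  assumes pair: "real_bundle_pair S \<sigma> E p vadd smul \<phi>" and \<Psi>: "\<Psi> \<in> GL_pair E p vadd smul \<phi>"
  obtains \<Psi>' where "homeomorphic_maps E E \<Psi> \<Psi>'" "\<Psi>' \<in> GL_pair E p vadd smul \<phi>"
proof -
  obtain \<Psi>' where inv: "homeomorphic_maps E E \<Psi> \<Psi>'"
    using \<Psi> unfolding GL_pair_def homeomorphic_map_maps by blast
  have closed: "\<And>e e'. e \<in> topspace E \<Longrightarrow> e' \<in> topspace E \<Longrightarrow> p e = p e' \<Longrightarrow>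
      vadd e e' \<in> topspace E \<and> p (vadd e e') = p e"
    "\<And>a e. e \<in> topspace E \<Longrightarrow> smul a e \<in> topspace E"
    "\<And>e. e \<in> topspace E \<Longrightarrow> \<phi> e \<in> topspace E"
    using pair by (auto simp: real_bundle_pair_def complex_vector_bundle_def continuous_map_def)
  have inv_in: "\<Psi>' e \<in> topspace E" "\<Psi> (\<Psi>' e) = e" if "e \<in> topspace E" for e
    using inv that by (auto simp: homeomorphic_maps_def continuous_map_def)
  have \<Psi>_inj: "e = e'" if "e \<in> topspace E" "e' \<in> topspace E" "\<Psi> e = \<Psi> e'" for e e'
    using inv that by (metis homeomorphic_maps_def)
  have \<Psi>_props: "\<And>e. e \<in> topspace E \<Longrightarrow> p (\<Psi> e) = p e \<and> \<Psi> (\<phi> e) = \<phi> (\<Psi> e)"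
    "\<And>e e'. e \<in> topspace E \<Longrightarrow> e' \<in> topspace E \<Longrightarrow> p e = p e' \<Longrightarrow> \<Psi> (vadd e e') = vadd (\<Psi> e) (\<Psi> e')"
    "\<And>a e. e \<in> topspace E \<Longrightarrow> \<Psi> (smul a e) = smul a (\<Psi> e)"
    using \<Psi> by (auto simp: GL_pair_def)
  have p_inv: "p (\<Psi>' e) = p e" if "e \<in> topspace E" for e
    using \<Psi>_props(1) inv_in that by metis
  have "\<Psi>' \<in> GL_pair E p vadd smul \<phi>"
    unfolding GL_pair_def
  proof (intro CollectI conjI ballI allI impI)
    show "homeomorphic_map E E \<Psi>'" using inv homeomorphic_maps_sym homeomorphic_map_maps by blast
    fix e assume e: "e \<in> topspace E"
    show "p (\<Psi>' e) = p e" by (rule p_inv[OF e])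
    show "\<Psi>' (\<phi> e) = \<phi> (\<Psi>' e)"
      by (rule \<Psi>_inj) (use e inv_in closed(3) \<Psi>_props(1) in auto)
    show "\<Psi>' (smul a e) = smul a (\<Psi>' e)" for a
      by (rule \<Psi>_inj) (use e inv_in closed(2) \<Psi>_props(3) in auto)
    fix e' assume e': "e' \<in> topspace E" and pe: "p e = p e'"
    show "\<Psi>' (vadd e e') = vadd (\<Psi>' e) (\<Psi>' e')"
      by (rule \<Psi>_inj) (use e e' pe inv_in closed(1) \<Psi>_props(2) p_inv in auto)
  qed
  with inv show ?thesis by (rule that)
qed

locale trivialized_real_pair =
  fixes S :: "'a topology" and \<sigma> :: "'a \<Rightarrow> 'a" and E :: "'b topology" and p :: "'b \<Rightarrow> 'a"
    and vadd :: "'b \<Rightarrow> 'b \<Rightarrow> 'b" and smul :: "complex \<Rightarrow> 'b \<Rightarrow> 'b" and \<phi> :: "'b \<Rightarrow> 'b"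
    and U1 :: "'a set" and m :: nat and h :: "'b \<Rightarrow> 'a \<times> (nat \<Rightarrow> complex)"
    and k :: "'a \<times> (nat \<Rightarrow> complex) \<Rightarrow> 'b"
  assumes real_pair: "real_bundle_pair S \<sigma> E p vadd smul \<phi>"
    and sigma_cont: "continuous_map S S \<sigma>"
    and sigma_invol: "\<forall>y\<in>topspace S. \<sigma> (\<sigma> y) = y"
    and U1_open: "openin S U1"
    and trivialization: "homeomorphic_maps (subtopology E {e \<in> topspace E. p e \<in> U1})
      (prod_topology (subtopology S U1) (top_of_set (fspace m))) h k"
    and h_fst: "\<forall>e\<in>topspace E. p e \<in> U1 \<longrightarrow> fst (h e) = p e"
    and h_vadd: "\<forall>e\<in>topspace E. \<forall>e'\<in>topspace E. p e \<in> U1 \<and> p e = p e' \<longrightarrow>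
      snd (h (vadd e e')) = (\<lambda>i. snd (h e) i + snd (h e') i)"
    and h_smul: "\<forall>e\<in>topspace E. \<forall>a. p e \<in> U1 \<longrightarrow> snd (h (smul a e)) = (\<lambda>i. a * snd (h e) i)"
begin

lemma p_cont: "continuous_map E S p"
  and vadd_closed: "\<And>e e'. e \<in> topspace E \<Longrightarrow> e' \<in> topspace E \<Longrightarrow> p e = p e' \<Longrightarrow>
    vadd e e' \<in> topspace E \<and> p (vadd e e') = p e"
  and smul_closed: "\<And>a e. e \<in> topspace E \<Longrightarrow> smul a e \<in> topspace E \<and> p (smul a e) = p e"
  and phi_cont: "continuous_map E E \<phi>"
  and phi_fiber: "\<And>e. e \<in> topspace E \<Longrightarrow> p (\<phi> e) = \<sigma> (p e) \<and> \<phi> (\<phi> e) = e"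
  and phi_vadd: "\<And>e e'. e \<in> topspace E \<Longrightarrow> e' \<in> topspace E \<Longrightarrow> p e = p e' \<Longrightarrow>
    \<phi> (vadd e e') = vadd (\<phi> e) (\<phi> e')"
  and phi_smul: "\<And>a e. e \<in> topspace E \<Longrightarrow> \<phi> (smul a e) = smul (cnj a) (\<phi> e)"
  using real_pair by (simp_all add: real_bundle_pair_def complex_vector_bundle_def)

lemma p_topspace: "e \<in> topspace E \<Longrightarrow> p e \<in> topspace S"
  using p_cont by (meson continuous_map_def funcset_mem)

lemma phi_topspace: "e \<in> topspace E \<Longrightarrow> \<phi> e \<in> topspace E"
  using phi_cont by (meson continuous_map_def funcset_mem)

lemma sigma_topspace: "y \<in> topspace S \<Longrightarrow> \<sigma> y \<in> topspace S"
  using sigma_cont by (meson continuous_map_def funcset_mem)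

lemma U1_topspace: "U1 \<subseteq> topspace S"
  using U1_open by (rule openin_subset)

lemma k_props:
  assumes "y \<in> U1" "v \<in> fspace m"
  shows "k (y, v) \<in> topspace E" "p (k (y, v)) = y" "h (k (y, v)) = (y, v)"
proof -
  have yv: "(y, v) \<in> topspace (prod_topology (subtopology S U1) (top_of_set (fspace m)))"
    using assms U1_topspace by auto
  then have "k (y, v) \<in> topspace (subtopology E {e \<in> topspace E. p e \<in> U1})"
    using trivialization unfolding homeomorphic_maps_def by (meson continuous_map_def funcset_mem)
  moreover show hk: "h (k (y, v)) = (y, v)"
    using trivialization yv unfolding homeomorphic_maps_def by blast
  ultimately have "k (y, v) \<in> topspace E" "p (k (y, v)) \<in> U1" by auto
  then show "k (y, v) \<in> topspace E" "p (k (y, v)) = y"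
    using h_fst hk by (simp, metis fst_conv)
qed

lemma h_props:
  assumes "e \<in> topspace E" "p e \<in> U1"
  shows "snd (h e) \<in> fspace m" "k (p e, snd (h e)) = e"
proof -
  have e: "e \<in> topspace (subtopology E {e \<in> topspace E. p e \<in> U1})" using assms by auto
  then have "h e \<in> topspace (prod_topology (subtopology S U1) (top_of_set (fspace m)))"
    using trivialization unfolding homeomorphic_maps_def by (meson continuous_map_def funcset_mem)
  then show "snd (h e) \<in> fspace m" by (auto simp: mem_Times_iff)
  have "h e = (p e, snd (h e))" using h_fst assms by (metis prod.collapse)
  moreover have "k (h e) = e" using trivialization e unfolding homeomorphic_maps_def by blast
  ultimately show "k (p e, snd (h e)) = e" by simp
qed

lemma h_inj:
  assumes "e \<in> topspace E" "e' \<in> topspace E" "p e \<in> U1" "p e = p e'" "snd (h e) = snd (h e')"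
  shows "e = e'"
  using h_props[OF assms(1,3)] h_props[OF assms(2)] assms by metis

lemma fiber_closed:
  "e \<in> fiber E p y \<Longrightarrow> e' \<in> fiber E p y \<Longrightarrow> vadd e e' \<in> fiber E p y"
  "e \<in> fiber E p y \<Longrightarrow> smul a e \<in> fiber E p y"
  using vadd_closed smul_closed by (auto simp: fiber_def)

lemma fiber_chart_trivialization: "y \<in> U1 \<Longrightarrow> fiber_chart E p vadd smul y m (\<lambda>e. snd (h e))"
proof (unfold_locales)
  assume y: "y \<in> U1"
  show "snd (h (vadd e e')) = (\<lambda>i. snd (h e) i + snd (h e') i)"
    if "e \<in> fiber E p y" "e' \<in> fiber E p y" for e e' using that h_vadd y by (auto simp: fiber_def)
  show "snd (h (smul a e)) = (\<lambda>i. a * snd (h e) i)" if "e \<in> fiber E p y" for a e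
    using that h_smul y by (auto simp: fiber_def)
  have "inj_on (\<lambda>e. snd (h e)) (fiber E p y)"
    using y by (auto simp: inj_on_def fiber_def intro: h_inj)
  moreover have "(\<lambda>e. snd (h e)) ` fiber E p y = fspace m"
    using h_props y k_props[OF y] by (force simp: fiber_def image_iff)
  ultimately show "bij_betw (\<lambda>e. snd (h e)) (fiber E p y) (fspace m)"
    by (simp add: bij_betw_def)
qed (simp_all add: fiber_closed)

lemma cnj_fspace: "w \<in> fspace m \<Longrightarrow> (\<lambda>i. cnj (w i)) \<in> fspace m"
  by (auto simp: fspace_def)

text \<open>Over \<open>\<sigma>(U1)\<close> the fibres are charted through \<open>\<phi>\<close>; conjugation makes the chart \<open>\<complex>\<close>-linear.\<close>

lemma fiber_chart_conj:
  assumes y: "y \<in> topspace S" "\<sigma> y \<in> U1"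
  shows "fiber_chart E p vadd smul y m (\<lambda>e i. cnj (snd (h (\<phi> e)) i))"
proof (unfold_locales)
  have \<phi>: "\<phi> e \<in> topspace E \<and> p (\<phi> e) = \<sigma> y" if "e \<in> fiber E p y" for e
    using that phi_topspace phi_fiber by (auto simp: fiber_def)
  show "(\<lambda>i. cnj (snd (h (\<phi> (vadd e e'))) i)) = (\<lambda>i. cnj (snd (h (\<phi> e)) i) + cnj (snd (h (\<phi> e')) i))"
    if "e \<in> fiber E p y" "e' \<in> fiber E p y" for e e'
    using that h_vadd phi_vadd \<phi> y by (auto simp: fiber_def)
  show "(\<lambda>i. cnj (snd (h (\<phi> (smul a e))) i)) = (\<lambda>i. a * cnj (snd (h (\<phi> e)) i))"
    if "e \<in> fiber E p y" for a e
    using that h_smul phi_smul \<phi> y by (auto simp: fiber_def)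
  have "inj_on (\<lambda>e i. cnj (snd (h (\<phi> e)) i)) (fiber E p y)"
  proof (rule inj_onI)
    fix e e' assume e: "e \<in> fiber E p y" "e' \<in> fiber E p y"
      and eq: "(\<lambda>i. cnj (snd (h (\<phi> e)) i)) = (\<lambda>i. cnj (snd (h (\<phi> e')) i))"
    have "snd (h (\<phi> e)) = snd (h (\<phi> e'))" using eq by (simp add: fun_eq_iff)
    then have "\<phi> e = \<phi> e'"
      by (rule h_inj[rotated -1]) (use \<phi>[OF e(1)] \<phi>[OF e(2)] y(2) in simp_all)
    then have "\<phi> (\<phi> e) = \<phi> (\<phi> e')" by simp
    then show "e = e'" using e phi_fiber by (simp add: fiber_def)
  qed
  moreover have "(\<lambda>e i. cnj (snd (h (\<phi> e)) i)) ` fiber E p y = fspace m"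
  proof
    show "(\<lambda>e i. cnj (snd (h (\<phi> e)) i)) ` fiber E p y \<subseteq> fspace m"
      using h_props \<phi> y by (auto intro!: cnj_fspace)
    show "fspace m \<subseteq> (\<lambda>e i. cnj (snd (h (\<phi> e)) i)) ` fiber E p y"
    proof
      fix v assume "v \<in> fspace m"
      note k = k_props[OF y(2) cnj_fspace[OF this]]
      then have "\<phi> (k (\<sigma> y, \<lambda>i. cnj (v i))) \<in> fiber E p y"
        using phi_topspace phi_fiber sigma_invol y by (auto simp: fiber_def)
      moreover have "\<phi> (\<phi> (k (\<sigma> y, \<lambda>i. cnj (v i)))) = k (\<sigma> y, \<lambda>i. cnj (v i))"
        using k phi_fiber by auto
      ultimately show "v \<in> (\<lambda>e i. cnj (snd (h (\<phi> e)) i)) ` fiber E p y"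
        using k by (auto simp: image_iff intro!: bexI)
    qed
  qed
  ultimately show "bij_betw (\<lambda>e i. cnj (snd (h (\<phi> e)) i)) (fiber E p y) (fspace m)"
    by (simp add: bij_betw_def)
qed (simp_all add: fiber_closed)

definition local_matrix :: "'a \<Rightarrow> ('b \<Rightarrow> 'b) \<Rightarrow> nat \<Rightarrow> nat \<Rightarrow> complex" where
  "local_matrix y L = (\<lambda>i j. snd (h (L (k (y, unit_fvec j)))) i)"

lemma local_matrix_action:
  assumes y: "y \<in> U1" and L: "L \<in> GL_pair E p vadd smul \<phi>" and v: "v \<in> fiber E p y"
  shows "snd (h (L v)) = fmat_vec m (local_matrix y L) (snd (h v))"
proof -
  interpret fiber_chart E p vadd smul y m "\<lambda>e. snd (h e)" by (rule fiber_chart_trivialization[OF y])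
  have "chart_inv w = k (y, w)" if "w \<in> fspace m" for w
    by (rule chart_inj)
      (use k_props[OF y that] chart_inv_in_fiber[OF that] in \<open>auto simp: chart_chart_inv that fiber_def\<close>)
  then have "fmat_vec m (chart_matrix L) = fmat_vec m (local_matrix y L)"
    by (intro ext fmat_vec_cong) (simp add: chart_matrix_def local_matrix_def unit_fvec_in_fspace)
  moreover have "snd (h (L v)) = fmat_vec m (chart_matrix L) (snd (h v))"
    using GL_pair_fiberwise_linear[OF L] v by (rule chart_linear_map)
  ultimately show ?thesis by simp
qed

end

section \<open>The twist\<close>

text \<open>The open set \<open>W\<close>, on which \<open>f\<close> and \<open>f \<circ> \<sigma>\<close> vanish, covers the complement of
  \<open>U0 \<union> \<sigma>(U0)\<close>; it is what makes the piecewise definition of the twist continuous.\<close>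

locale twist_data = trivialized_real_pair +
  fixes U0 W :: "'a set" and f :: "'a \<Rightarrow> real"
  assumes U0_open: "openin S U0" and U0_sub: "U0 \<subseteq> U1" and U0_disjoint: "\<forall>y\<in>U0. \<sigma> y \<notin> U0"
    and W_open: "openin S W" and cover: "\<forall>y\<in>topspace S. y \<in> U0 \<or> \<sigma> y \<in> U0 \<or> y \<in> W"
    and f_W: "\<forall>y\<in>W. f y = 0 \<and> f (\<sigma> y) = 0"
    and f_cont: "continuous_map S (top_of_set {0..1}) f"
begin

definition chart_twist :: "(real \<Rightarrow> nat \<Rightarrow> nat \<Rightarrow> complex) \<Rightarrow> real \<Rightarrow> 'b \<Rightarrow> 'b" where
  "chart_twist G t e = k (p e, fmat_vec m (G (t * f (p e))) (snd (h e)))"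

definition twist :: "(real \<Rightarrow> nat \<Rightarrow> nat \<Rightarrow> complex) \<Rightarrow> real \<Rightarrow> 'b \<Rightarrow> 'b" where
  "twist G t e = (if p e \<in> U0 then chart_twist G t e
     else if \<sigma> (p e) \<in> U0 then \<phi> (chart_twist G t (\<phi> e)) else e)"

lemma scaled_cutoff_in:
  assumes "y \<in> topspace S" "t \<in> {0..1}"
  shows "t * f y \<in> {0..1}"
proof -
  have "f y \<in> {0..1}" using continuous_map_image_subset_topspace[OF f_cont] assms(1) by auto
  with assms(2) show ?thesis by (auto intro: mult_le_one)
qed

lemma sigma_U0_disjoint: "y \<in> topspace S \<Longrightarrow> \<sigma> y \<in> U0 \<Longrightarrow> y \<notin> U0"
  using U0_disjoint sigma_invol by metis

lemma chart_twist_props: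
  assumes "e \<in> topspace E" "p e \<in> U1"
  shows "chart_twist G t e \<in> topspace E" "p (chart_twist G t e) = p e"
    "snd (h (chart_twist G t e)) = fmat_vec m (G (t * f (p e))) (snd (h e))"
  using k_props[OF assms(2) fmat_vec_in_fspace] by (auto simp: chart_twist_def)

lemma phi_chart_twist_props:
  assumes "e \<in> topspace E" "\<sigma> (p e) \<in> U1"
  shows "\<phi> (chart_twist G t (\<phi> e)) \<in> topspace E" "p (\<phi> (chart_twist G t (\<phi> e))) = p e"
    "\<phi> (\<phi> (chart_twist G t (\<phi> e))) = chart_twist G t (\<phi> e)"
  using chart_twist_props[of "\<phi> e"] assms phi_topspace phi_fiber sigma_invol p_topspace by auto

lemma twist_props:
  assumes "e \<in> topspace E"
  shows "twist G t e \<in> topspace E" "p (twist G t e) = p e"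
  using assms chart_twist_props phi_chart_twist_props U0_sub by (auto simp: twist_def)

lemma chart_twist_id:
  assumes "e \<in> topspace E" "p e \<in> U1" "\<And>i j. i < m \<Longrightarrow> j < m \<Longrightarrow> G (t * f (p e)) i j = fmat_one i j"
  shows "chart_twist G t e = e"
proof -
  have "fmat_vec m (G (t * f (p e))) (snd (h e)) = fmat_vec m fmat_one (snd (h e))"
    by (rule fmat_vec_cong) (rule assms(3))
  then show ?thesis using h_props[OF assms(1,2)] fmat_vec_one by (simp add: chart_twist_def)
qed

lemma twist_start:
  assumes "e \<in> topspace E" "\<And>i j. i < m \<Longrightarrow> j < m \<Longrightarrow> G 0 i j = fmat_one i j"
  shows "twist G 0 e = e"
  using assms chart_twist_id[of e G 0] chart_twist_id[of "\<phi> e" G 0] U0_sub phi_topspace phi_fiber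
  by (auto simp: twist_def)

lemma twist_outside_U0: "p e \<notin> U0 \<Longrightarrow> \<sigma> (p e) \<notin> U0 \<Longrightarrow> twist G t e = e"
  by (simp add: twist_def)

lemma twist_on_W:
  assumes "e \<in> topspace E" "p e \<in> W" "\<And>i j. i < m \<Longrightarrow> j < m \<Longrightarrow> G 0 i j = fmat_one i j"
  shows "twist G t e = e"
  using assms chart_twist_id[OF assms(1), of G t] chart_twist_id[OF phi_topspace[OF assms(1)], of G t]
    f_W U0_sub phi_fiber by (auto simp: twist_def)

lemma twist_phi:
  assumes "e \<in> topspace E"
  shows "twist G t (\<phi> e) = \<phi> (twist G t e)"
proof -
  have \<sigma>\<sigma>: "\<sigma> (\<sigma> (p e)) = p e" using sigma_invol p_topspace[OF assms] by auto
  show ?thesis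
    using assms \<sigma>\<sigma> U0_disjoint U0_sub phi_topspace phi_fiber phi_chart_twist_props[of e G t]
    by (auto simp: twist_def)
qed

lemma chart_twist_vadd:
  assumes "e \<in> topspace E" "e' \<in> topspace E" "p e \<in> U1" "p e = p e'"
  shows "chart_twist G t (vadd e e') = vadd (chart_twist G t e) (chart_twist G t e')"
proof (rule h_inj)
  show "snd (h (chart_twist G t (vadd e e'))) = snd (h (vadd (chart_twist G t e) (chart_twist G t e')))"
    using assms vadd_closed[OF assms(1,2,4)] chart_twist_props[of e] chart_twist_props[of e']
      chart_twist_props[of "vadd e e'"] h_vadd by (simp add: fmat_vec_add)
qed (use assms vadd_closed chart_twist_props in auto)

lemma chart_twist_smul:
  assumes "e \<in> topspace E" "p e \<in> U1"
  shows "chart_twist G t (smul a e) = smul a (chart_twist G t e)"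
proof (rule h_inj)
  show "snd (h (chart_twist G t (smul a e))) = snd (h (smul a (chart_twist G t e)))"
    using assms smul_closed[OF assms(1)] chart_twist_props[of e] chart_twist_props[of "smul a e"] h_smul
    by (simp add: fmat_vec_scale)
qed (use assms smul_closed chart_twist_props in auto)

lemma twist_vadd:
  assumes e: "e \<in> topspace E" "e' \<in> topspace E" "p e = p e'"
  shows "twist G t (vadd e e') = vadd (twist G t e) (twist G t e')"
proof -
  have v: "vadd e e' \<in> topspace E" "p (vadd e e') = p e" using vadd_closed e by auto
  consider "p e \<in> U0" | "p e \<notin> U0" "\<sigma> (p e) \<in> U0" | "p e \<notin> U0" "\<sigma> (p e) \<notin> U0" by blast
  then show ?thesis
  proof cases
    case 1
    then show ?thesis using chart_twist_vadd[OF e(1,2) _ e(3)] U0_sub v e by (auto simp: twist_def)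
  next
    case 2
    have \<phi>e: "\<phi> e \<in> topspace E" "\<phi> e' \<in> topspace E" "p (\<phi> e) \<in> U1" "p (\<phi> e) = p (\<phi> e')"
      using phi_topspace e phi_fiber 2 U0_sub by auto
    have "\<phi> (chart_twist G t (\<phi> (vadd e e'))) =
        \<phi> (vadd (chart_twist G t (\<phi> e)) (chart_twist G t (\<phi> e')))"
      using phi_vadd e chart_twist_vadd[OF \<phi>e] by auto
    also have "\<dots> = vadd (\<phi> (chart_twist G t (\<phi> e))) (\<phi> (chart_twist G t (\<phi> e')))"
      using \<phi>e chart_twist_props by (intro phi_vadd) auto
    finally show ?thesis using 2 v e by (auto simp: twist_def)
  next
    case 3
    then show ?thesis using v e by (auto simp: twist_def)
  qed
qed

lemma twist_smul:
  assumes e: "e \<in> topspace E"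
  shows "twist G t (smul a e) = smul a (twist G t e)"
proof -
  have v: "smul a e \<in> topspace E" "p (smul a e) = p e" using smul_closed e by auto
  consider "p e \<in> U0" | "p e \<notin> U0" "\<sigma> (p e) \<in> U0" | "p e \<notin> U0" "\<sigma> (p e) \<notin> U0" by blast
  then show ?thesis
  proof cases
    case 1
    then show ?thesis using chart_twist_smul[OF e] U0_sub v by (auto simp: twist_def)
  next
    case 2
    have \<phi>e: "\<phi> e \<in> topspace E" "p (\<phi> e) \<in> U1" using phi_topspace e phi_fiber 2 U0_sub by auto
    have "\<phi> (chart_twist G t (\<phi> (smul a e))) = \<phi> (smul (cnj a) (chart_twist G t (\<phi> e)))"
      using phi_smul e chart_twist_smul[OF \<phi>e] by auto
    also have "\<dots> = smul a (\<phi> (chart_twist G t (\<phi> e)))"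
      using \<phi>e chart_twist_props phi_smul by auto
    finally show ?thesis using 2 v by (auto simp: twist_def)
  next
    case 3
    then show ?thesis using v by (auto simp: twist_def)
  qed
qed

lemma chart_twist_inverse:
  assumes "e \<in> topspace E" "p e \<in> U1"
    and "\<And>i j. i < m \<Longrightarrow> j < m \<Longrightarrow> fmat_mult m (G (t * f (p e))) (D (t * f (p e))) i j = fmat_one i j"
  shows "chart_twist G t (chart_twist D t e) = e"
proof -
  note D = chart_twist_props[OF assms(1,2), of D t]
  have "snd (h (chart_twist G t (chart_twist D t e))) =
      fmat_vec m (fmat_mult m (G (t * f (p e))) (D (t * f (p e)))) (snd (h e))"
    using chart_twist_props[of "chart_twist D t e"] D assms by (simp add: fmat_vec_fmat_vec)
  also have "\<dots> = fmat_vec m fmat_one (snd (h e))" by (rule fmat_vec_cong) (rule assms(3))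
  also have "\<dots> = snd (h e)" using h_props assms by (simp add: fmat_vec_one)
  finally show ?thesis
    by (rule h_inj[rotated -1]) (use chart_twist_props[of "chart_twist D t e"] D assms in auto)
qed

lemma twist_inverse:
  assumes "e \<in> topspace E" "t \<in> {0..1}"
    and "\<And>s i j. s \<in> {0..1} \<Longrightarrow> i < m \<Longrightarrow> j < m \<Longrightarrow> fmat_mult m (G s) (D s) i j = fmat_one i j"
  shows "twist G t (twist D t e) = e"
proof -
  have pe: "p e \<in> topspace S" using p_topspace assms by auto
  consider "p e \<in> U0" | "p e \<notin> U0" "\<sigma> (p e) \<in> U0" | "p e \<notin> U0" "\<sigma> (p e) \<notin> U0" by blast
  then show ?thesis
  proof cases
    case 1
    then show ?thesis
      using chart_twist_inverse[OF assms(1)] chart_twist_props[OF assms(1)] U0_sub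
        assms(3) scaled_cutoff_in[OF pe assms(2)] by (auto simp: twist_def)
  next
    case 2
    have \<phi>e: "\<phi> e \<in> topspace E" "p (\<phi> e) = \<sigma> (p e)" "\<phi> (\<phi> e) = e" using phi_topspace assms phi_fiber by auto
    have "chart_twist G t (chart_twist D t (\<phi> e)) = \<phi> e"
      using chart_twist_inverse[OF \<phi>e(1)] \<phi>e 2 U0_sub assms(3)
        scaled_cutoff_in[OF sigma_topspace[OF pe] assms(2)] by auto
    then show ?thesis
      using 2 \<phi>e phi_chart_twist_props[OF assms(1), of D t] U0_sub by (auto simp: twist_def)
  next
    case 3
    then show ?thesis by (simp add: twist_def)
  qed
qed

lemma continuous_chart_twist:
  assumes G_cont: "\<And>i j. i < m \<Longrightarrow> j < m \<Longrightarrow> continuous_on {0..1} (\<lambda>s. G s i j)"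
  shows "continuous_map (subtopology (prod_topology (top_of_set {0..1}) E)
      {z \<in> topspace (prod_topology (top_of_set {0..1}) E). p (snd z) \<in> U0}) E
    (\<lambda>z. chart_twist G (fst z) (snd z))"
proof -
  let ?Z = "subtopology (prod_topology (top_of_set {0..1::real}) E)
      {z \<in> topspace (prod_topology (top_of_set {0..1}) E). p (snd z) \<in> U0}"
  let ?Y = "prod_topology (subtopology S U1) (top_of_set (fspace m))"
  have snd_cont: "continuous_map ?Z (subtopology E {e \<in> topspace E. p e \<in> U1}) snd"
    by (rule continuous_map_into_subtopology)
      (use U0_sub in \<open>auto intro!: continuous_map_from_subtopology continuous_map_snd\<close>)
  have h_cont: "continuous_map (subtopology E {e \<in> topspace E. p e \<in> U1}) ?Y h"
    using trivialization by (simp add: homeomorphic_maps_def)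
  have k_cont: "continuous_map ?Y E k"
    using trivialization by (auto simp: homeomorphic_maps_def intro: continuous_map_into_fulltopology)
  have p_snd_cont: "continuous_map ?Z S (\<lambda>z. p (snd z))"
    using continuous_map_compose[OF continuous_map_into_fulltopology[OF snd_cont] p_cont]
    by (simp add: o_def)
  have fst_cont: "continuous_map ?Z euclideanreal fst"
    by (intro continuous_map_from_subtopology continuous_map_into_fulltopology[OF continuous_map_fst])
  have f_p_cont: "continuous_map ?Z (top_of_set {0..1}) (\<lambda>z. f (p (snd z)))"
    using continuous_map_compose[OF p_snd_cont f_cont] by (simp add: o_def)
  have arg_cont: "continuous_map ?Z (top_of_set {0..1}) (\<lambda>z. fst z * f (p (snd z)))"
  proof (rule continuous_map_into_subtopology)
    show "continuous_map ?Z euclideanreal (\<lambda>z. fst z * f (p (snd z)))"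
      by (intro continuous_map_real_mult fst_cont continuous_map_into_fulltopology[OF f_p_cont])
    show "(\<lambda>z. fst z * f (p (snd z))) \<in> topspace ?Z \<rightarrow> {0..1}"
      using continuous_map_image_subset_topspace[OF f_p_cont] by (fastforce intro: mult_le_one)
  qed
  have coord_cont: "continuous_map ?Z (top_of_set (fspace m)) (\<lambda>z. snd (h (snd z)))"
    using continuous_map_compose[OF continuous_map_compose[OF snd_cont h_cont] continuous_map_snd]
    by (simp add: o_def)
  have "continuous_map ?Z (top_of_set (fspace m))
      (\<lambda>z. fmat_vec m (G (fst z * f (p (snd z)))) (snd (h (snd z))))"
    by (intro continuous_map_fmat_vec continuous_map_compose_continuous_on[OF arg_cont] G_cont coord_cont)
  then have "continuous_map ?Z ?Y
      (\<lambda>z. (p (snd z), fmat_vec m (G (fst z * f (p (snd z)))) (snd (h (snd z)))))"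
    using U0_sub by (intro continuous_map_pairedI continuous_map_into_subtopology[OF p_snd_cont]) auto
  then show ?thesis using continuous_map_compose[OF _ k_cont] by (simp add: o_def chart_twist_def)
qed

lemma continuous_conj_chart_twist:
  assumes G_cont: "\<And>i j. i < m \<Longrightarrow> j < m \<Longrightarrow> continuous_on {0..1} (\<lambda>s. G s i j)"
  shows "continuous_map (subtopology (prod_topology (top_of_set {0..1}) E)
      {z \<in> topspace (prod_topology (top_of_set {0..1}) E). \<sigma> (p (snd z)) \<in> U0}) E
    (\<lambda>z. \<phi> (chart_twist G (fst z) (\<phi> (snd z))))"
proof -
  let ?X = "prod_topology (top_of_set {0..1::real}) E"
  have "continuous_map (subtopology ?X {z \<in> topspace ?X. \<sigma> (p (snd z)) \<in> U0})
      (subtopology ?X {z \<in> topspace ?X. p (snd z) \<in> U0}) (\<lambda>z. (fst z, \<phi> (snd z)))"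
  proof (rule continuous_map_into_subtopology)
    show "continuous_map (subtopology ?X {z \<in> topspace ?X. \<sigma> (p (snd z)) \<in> U0}) ?X
        (\<lambda>z. (fst z, \<phi> (snd z)))"
      by (intro continuous_map_from_subtopology continuous_map_pairedI continuous_map_fst)
        (use continuous_map_compose[OF continuous_map_snd phi_cont] in \<open>simp add: o_def\<close>)
  qed (use phi_topspace phi_fiber in auto)
  from continuous_map_compose[OF continuous_map_compose[OF this continuous_chart_twist[OF G_cont]] phi_cont]
  show ?thesis by (simp add: o_def)
qed

lemma continuous_twist:
  assumes G_cont: "\<And>i j. i < m \<Longrightarrow> j < m \<Longrightarrow> continuous_on {0..1} (\<lambda>s. G s i j)"
    and G_0: "\<And>i j. i < m \<Longrightarrow> j < m \<Longrightarrow> G 0 i j = fmat_one i j"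
  shows "continuous_map (prod_topology (top_of_set {0..1}) E) E (\<lambda>(t, e). twist G t e)"
proof -
  let ?X = "prod_topology (top_of_set {0..1::real}) E"
  let ?g = "\<lambda>z. twist G (fst z) (snd z)"
  define T1 where "T1 = {z \<in> topspace ?X. p (snd z) \<in> U0}"
  define T2 where "T2 = {z \<in> topspace ?X. \<sigma> (p (snd z)) \<in> U0}"
  define T3 where "T3 = {z \<in> topspace ?X. p (snd z) \<in> W}"
  have p_snd_cont: "continuous_map ?X S (\<lambda>z. p (snd z))"
    using continuous_map_compose[OF continuous_map_snd p_cont] by (simp add: o_def)
  have \<sigma>_p_snd_cont: "continuous_map ?X S (\<lambda>z. \<sigma> (p (snd z)))"
    using continuous_map_compose[OF p_snd_cont sigma_cont] by (simp add: o_def)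
  have cont1: "continuous_map (subtopology ?X T1) E ?g"
  proof (rule continuous_map_eq)
    show "continuous_map (subtopology ?X T1) E (\<lambda>z. chart_twist G (fst z) (snd z))"
      unfolding T1_def by (rule continuous_chart_twist[OF G_cont])
  qed (auto simp: twist_def T1_def)
  have cont2: "continuous_map (subtopology ?X T2) E ?g"
  proof (rule continuous_map_eq)
    show "continuous_map (subtopology ?X T2) E (\<lambda>z. \<phi> (chart_twist G (fst z) (\<phi> (snd z))))"
      unfolding T2_def by (rule continuous_conj_chart_twist[OF G_cont])
    fix z assume "z \<in> topspace (subtopology ?X T2)"
    then have "snd z \<in> topspace E" "\<sigma> (p (snd z)) \<in> U0" by (auto simp: T2_def)
    with sigma_U0_disjoint[OF p_topspace] show "\<phi> (chart_twist G (fst z) (\<phi> (snd z))) = ?g z"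
      by (simp add: twist_def)
  qed
  have cont3: "continuous_map (subtopology ?X T3) E ?g"
  proof (rule continuous_map_eq)
    show "continuous_map (subtopology ?X T3) E snd"
      by (intro continuous_map_from_subtopology continuous_map_snd)
    fix z assume "z \<in> topspace (subtopology ?X T3)"
    then show "snd z = ?g z" using twist_on_W[where G = G, OF _ _ G_0] by (auto simp: T3_def)
  qed
  have opens: "openin ?X T1" "openin ?X T2" "openin ?X T3"
    unfolding T1_def T2_def T3_def
    by (intro openin_continuous_map_preimage[OF p_snd_cont U0_open]
        openin_continuous_map_preimage[OF \<sigma>_p_snd_cont U0_open]
        openin_continuous_map_preimage[OF p_snd_cont W_open])+
  have covered: "\<exists>T\<in>{T1, T2, T3}. z \<in> T" if "z \<in> topspace ?X" for z
    using that cover p_topspace by (auto simp: T1_def T2_def T3_def)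
  have "continuous_map ?X E ?g"
    by (rule pasting_lemma[where I = "{T1, T2, T3}" and T = "\<lambda>T. T" and f = "\<lambda>_. ?g"])
      (use cont1 cont2 cont3 opens covered in auto)
  then show ?thesis by (simp add: case_prod_unfold)
qed

lemma twist_fiber: "v \<in> fiber E p y \<Longrightarrow> twist G t v \<in> fiber E p y"
  using twist_props by (auto simp: fiber_def)

lemma twist_in_chart:
  assumes "y \<in> U0" "v \<in> fiber E p y"
  shows "snd (h (twist G t v)) = fmat_vec m (G (t * f y)) (snd (h v))"
  using assms chart_twist_props[of v G t] U0_sub by (auto simp: fiber_def twist_def)

lemma twist_in_conj_chart:
  assumes y: "y \<in> topspace S" "\<sigma> y \<in> U0" and v: "v \<in> fiber E p y"
  shows "(\<lambda>i. cnj (snd (h (\<phi> (twist G t v))) i)) =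
    fmat_vec m (\<lambda>i j. cnj (G (t * f (\<sigma> y)) i j)) (\<lambda>i. cnj (snd (h (\<phi> v)) i))"
proof -
  have \<phi>v: "\<phi> v \<in> topspace E" "p (\<phi> v) = \<sigma> y" "p (\<phi> v) \<in> U1"
    using v y(2) U0_sub phi_topspace phi_fiber by (auto simp: fiber_def)
  have "\<phi> (twist G t v) = chart_twist G t (\<phi> v)"
    using v y(2) \<phi>v sigma_U0_disjoint[OF y] phi_fiber chart_twist_props by (auto simp: fiber_def twist_def)
  then show ?thesis using chart_twist_props(3)[OF \<phi>v(1,3), of G t] \<phi>v by (simp add: fmat_vec_cnj)
qed

lemma detn_twist:
  assumes y: "y \<in> topspace S" and b: "fiber_basis E p vadd smul y n b"
    and P: "P \<in> GL_pair E p vadd smul \<phi>"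
    and G_det: "\<And>s. s \<in> {0..1} \<Longrightarrow> detn m (G s) = 1" and t: "t \<in> {0..1}"
  shows "detn n (\<lambda>i j. coords E p vadd smul y n b (P (twist G t (b j))) i) =
    detn n (\<lambda>i j. coords E p vadd smul y n b (P (b j)) i)"
proof -
  note P_linear = GL_pair_fiberwise_linear[OF P, where y = y]
  consider "y \<in> U0" | "\<sigma> y \<in> U0" | "y \<notin> U0" "\<sigma> y \<notin> U0" by blast
  then show ?thesis
  proof cases
    case 1
    interpret fiber_chart E p vadd smul y m "\<lambda>e. snd (h e)"
      using fiber_chart_trivialization 1 U0_sub by auto
    have det: "detn m (G (t * f y)) = 1" by (rule G_det[OF scaled_cutoff_in[OF y t]])
    show ?thesis
      by (rule detn_fiber_basis_comp_unimodular[where P = P and A = "twist G t" and H = "G (t * f y)"])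
        (fact b P_linear twist_fiber twist_in_chart[OF 1] det)+
  next
    case 2
    interpret fiber_chart E p vadd smul y m "\<lambda>e i. cnj (snd (h (\<phi> e)) i)"
      using fiber_chart_conj 2 U0_sub y by auto
    have det: "detn m (\<lambda>i j. cnj (G (t * f (\<sigma> y)) i j)) = 1"
      using G_det[OF scaled_cutoff_in[OF sigma_topspace[OF y] t]] by (simp add: detn_cnj)
    show ?thesis
      by (rule detn_fiber_basis_comp_unimodular[where P = P and A = "twist G t"
          and H = "\<lambda>i j. cnj (G (t * f (\<sigma> y)) i j)"])
        (fact b P_linear twist_fiber twist_in_conj_chart[OF y 2] det)+
  next
    case 3
    then have "twist G t (b j) = b j" if "j < n" for j
      using fiber_basis_in_fiber[OF b that] by (simp add: fiber_def twist_outside_U0)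
    then show ?thesis by (intro detn_cong) simp
  qed
qed

end

section \<open>The path of automorphisms\<close>

context twist_data
begin

lemma homeomorphic_map_twist:
  assumes \<gamma>_cont: "\<And>i j. continuous_on {0..1} (\<lambda>s. \<gamma> s i j)" and \<gamma>_0: "\<gamma> 0 = fmat_one"
    and \<gamma>_det: "\<And>s. s \<in> {0..1} \<Longrightarrow> detn m (\<gamma> s) \<noteq> 0" and t: "t \<in> {0..1}"
  shows "homeomorphic_map E E (twist \<gamma> t)"
proof -
  define \<delta> where "\<delta> s = fmat_inv m (\<gamma> s)" for s
  have inv: "fmat_mult m (\<gamma> s) (\<delta> s) i j = fmat_one i j" "fmat_mult m (\<delta> s) (\<gamma> s) i j = fmat_one i j"
    if "s \<in> {0..1}" "i < m" "j < m" for s i j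
    using fmat_mult_inv[OF \<gamma>_det[OF that(1)] that(2,3)] by (simp_all add: \<delta>_def)
  have \<delta>_cont: "continuous_on {0..1} (\<lambda>s. \<delta> s i j)" if "i < m" "j < m" for i j
    unfolding \<delta>_def using \<gamma>_cont \<gamma>_det that by (rule continuous_on_fmat_inv)
  have \<delta>_0: "\<delta> 0 i j = fmat_one i j" if "i < m" "j < m" for i j
    using inv(1)[of 0 i j] that by (simp add: \<gamma>_0 fmat_mult_one_left)
  have slice: "continuous_map E (prod_topology (top_of_set {0..1}) E) (\<lambda>e. (t, e))"
    using t by (intro continuous_map_pairedI continuous_map_id) auto
  have "continuous_map E E (twist G t)"
    if "\<And>i j. i < m \<Longrightarrow> j < m \<Longrightarrow> continuous_on {0..1} (\<lambda>s. G s i j)"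
      "\<And>i j. i < m \<Longrightarrow> j < m \<Longrightarrow> G 0 i j = fmat_one i j" for G
    using continuous_map_compose[OF slice continuous_twist[OF that]] by (simp add: o_def)
  then have "homeomorphic_maps E E (twist \<gamma> t) (twist \<delta> t)"
    using twist_inverse[OF _ t] inv \<gamma>_cont \<delta>_cont \<delta>_0 by (simp add: homeomorphic_maps_def \<gamma>_0)
  then show ?thesis using homeomorphic_map_maps by blast
qed

lemma twist_in_GL_pair:
  assumes \<Psi>: "\<Psi> \<in> GL_pair E p vadd smul \<phi>" and twist: "homeomorphic_map E E (twist \<gamma> t)"
  shows "(\<lambda>e. \<Psi> (twist \<gamma> t e)) \<in> GL_pair E p vadd smul \<phi>"
  unfolding GL_pair_def
proof (intro CollectI conjI ballI allI impI)
  have "homeomorphic_map E E \<Psi>" using \<Psi> by (simp add: GL_pair_def)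
  then show "homeomorphic_map E E (\<lambda>e. \<Psi> (twist \<gamma> t e))"
    using homeomorphic_map_compose[OF twist] by (simp add: o_def)
  fix e assume e: "e \<in> topspace E"
  note \<Psi>_props = \<Psi>[unfolded GL_pair_def, simplified]
  show "p (\<Psi> (twist \<gamma> t e)) = p e" "\<Psi> (twist \<gamma> t (\<phi> e)) = \<phi> (\<Psi> (twist \<gamma> t e))"
    "\<Psi> (twist \<gamma> t (smul a e)) = smul a (\<Psi> (twist \<gamma> t e))" for a
    using \<Psi>_props twist_props[OF e] by (simp_all add: twist_phi[OF e] twist_smul[OF e])
  fix e' assume "e' \<in> topspace E" "p e = p e'"
  then show "\<Psi> (twist \<gamma> t (vadd e e')) = vadd (\<Psi> (twist \<gamma> t e)) (\<Psi> (twist \<gamma> t e'))"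
    using \<Psi>_props twist_props[OF e] twist_props[of e'] by (simp add: twist_vadd[OF e])
qed

lemma twist_in_SL_pair:
  assumes \<Psi>: "\<Psi> \<in> SL_pair S E p vadd smul \<phi>" and twist: "homeomorphic_map E E (twist \<gamma> t)"
    and \<gamma>_det: "\<And>s. s \<in> {0..1} \<Longrightarrow> detn m (\<gamma> s) = 1" and t: "t \<in> {0..1}"
  shows "(\<lambda>e. \<Psi> (twist \<gamma> t e)) \<in> SL_pair S E p vadd smul \<phi>"
proof -
  have GL: "\<Psi> \<in> GL_pair E p vadd smul \<phi>" using \<Psi> by (simp add: SL_pair_def)
  have "detn n (\<lambda>i j. coords E p vadd smul y n b (\<Psi> (twist \<gamma> t (b j))) i) = 1"
    if "y \<in> topspace S" "fiber_basis E p vadd smul y n b" for y n b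
    using detn_twist[OF that GL \<gamma>_det t] \<Psi> that by (simp add: SL_pair_def)
  then show ?thesis using twist_in_GL_pair[OF GL twist] by (simp add: SL_pair_def)
qed

lemma bundle_path_twist:
  assumes \<Psi>: "\<Psi> \<in> G" and G: "G \<subseteq> GL_pair E p vadd smul \<phi>"
    and in_G: "\<And>t. t \<in> {0..1} \<Longrightarrow> (\<lambda>e. \<Psi> (twist \<gamma> t e)) \<in> G"
    and \<gamma>_cont: "\<And>i j. continuous_on {0..1} (\<lambda>s. \<gamma> s i j)" and \<gamma>_0: "\<gamma> 0 = fmat_one"
  shows "bundle_path E G (\<lambda>t e. \<Psi> (twist \<gamma> t e))"
proof -
  have \<Psi>_cont: "continuous_map E E \<Psi>"
    using \<Psi> G by (auto simp: GL_pair_def dest: homeomorphic_imp_continuous_map)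
  have "continuous_map (prod_topology (top_of_set {0..1}) E) E (\<lambda>(t, e). twist \<gamma> t e)"
    by (rule continuous_twist) (simp_all add: \<gamma>_cont \<gamma>_0)
  from continuous_map_compose[OF this \<Psi>_cont]
  have "continuous_map (prod_topology (top_of_set {0..1}) E) E (\<lambda>(t, e). \<Psi> (twist \<gamma> t e))"
    by (simp add: o_def case_prod_unfold)
  with in_G show ?thesis by (simp add: bundle_path_def)
qed

lemma local_matrix_mult_inverse:
  assumes y: "y \<in> U1" and inv: "homeomorphic_maps E E \<Psi> \<Psi>'"
    and \<Psi>: "\<Psi> \<in> GL_pair E p vadd smul \<phi>" and \<Psi>': "\<Psi>' \<in> GL_pair E p vadd smul \<phi>"
    and ij: "i < m" "j < m"
  shows "fmat_mult m (local_matrix y \<Psi>) (local_matrix y \<Psi>') i j = fmat_one i j"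
proof -
  have k: "k (y, unit_fvec j) \<in> fiber E p y" "snd (h (k (y, unit_fvec j))) = unit_fvec j"
    using k_props[OF y unit_fvec_in_fspace[OF ij(2)]] by (auto simp: fiber_def)
  have "unit_fvec j = snd (h (\<Psi> (\<Psi>' (k (y, unit_fvec j)))))"
    using inv k by (auto simp: homeomorphic_maps_def fiber_def)
  also have "\<dots> = fmat_vec m (fmat_mult m (local_matrix y \<Psi>) (local_matrix y \<Psi>')) (unit_fvec j)"
    using local_matrix_action[OF y \<Psi>] local_matrix_action[OF y \<Psi>'] GL_pair_fiberwise_linear(1)[OF \<Psi>'] k
    by (simp add: fmat_vec_fmat_vec)
  finally show ?thesis
    using fmat_vec_unit_fvec[OF ij] by (metis fmat_one_def unit_fvec_def)
qed

lemma detn_local_matrix_SL: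
  assumes y: "y \<in> U1" and \<Psi>: "\<Psi> \<in> SL_pair S E p vadd smul \<phi>"
  shows "detn m (local_matrix y \<Psi>) = 1"
proof -
  interpret fiber_chart E p vadd smul y m "\<lambda>e. snd (h e)" by (rule fiber_chart_trivialization[OF y])
  have GL: "\<Psi> \<in> GL_pair E p vadd smul \<phi>" using \<Psi> by (simp add: SL_pair_def)
  have "detn m (local_matrix y \<Psi>) =
      detn m (\<lambda>i j. coords E p vadd smul y m (\<lambda>j. chart_inv (unit_fvec j)) (\<Psi> (chart_inv (unit_fvec j))) i)"
    using chart_fiber_basis GL_pair_fiberwise_linear(1)[OF GL] local_matrix_action[OF y GL]
    by (rule detn_fiber_basis[symmetric])
  also have "\<dots> = 1" using \<Psi> chart_fiber_basis y U1_topspace by (auto simp: SL_pair_def)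
  finally show ?thesis .
qed

lemma twist_at_center:
  assumes x: "x \<in> U0" "f x = 1" and \<Psi>': "\<Psi>' \<in> GL_pair E p vadd smul \<phi>"
    and \<gamma>_1: "\<gamma> 1 = local_matrix x \<Psi>'" and e: "e \<in> fiber E p x"
  shows "twist \<gamma> 1 e = \<Psi>' e"
proof -
  have x1: "x \<in> U1" using x U0_sub by auto
  have e': "\<Psi>' e \<in> topspace E" "p (\<Psi>' e) = x"
    using GL_pair_fiberwise_linear(1)[OF \<Psi>' e] by (auto simp: fiber_def)
  have "twist \<gamma> 1 e = k (x, fmat_vec m (local_matrix x \<Psi>') (snd (h e)))"
    using e x \<gamma>_1 by (simp add: twist_def chart_twist_def fiber_def)
  also have "\<dots> = k (p (\<Psi>' e), snd (h (\<Psi>' e)))" using local_matrix_action[OF x1 \<Psi>' e] e' by simp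
  also have "\<dots> = \<Psi>' e" using h_props(2)[OF e'(1)] e' x1 by simp
  finally show ?thesis .
qed

lemma inverse_local_matrix_path:
  assumes x: "x \<in> U1" and inv: "homeomorphic_maps E E \<Psi> \<Psi>'"
    and \<Psi>: "\<Psi> \<in> GL_pair E p vadd smul \<phi>" and \<Psi>': "\<Psi>' \<in> GL_pair E p vadd smul \<phi>"
  obtains \<gamma> :: "real \<Rightarrow> nat \<Rightarrow> nat \<Rightarrow> complex"
  where "\<And>i j. continuous_on {0..1} (\<lambda>s. \<gamma> s i j)" "\<gamma> 0 = fmat_one" "\<gamma> 1 = local_matrix x \<Psi>'"
    "\<And>s. s \<in> {0..1} \<Longrightarrow> detn m (\<gamma> s) \<noteq> 0"
    "\<Psi> \<in> SL_pair S E p vadd smul \<phi> \<Longrightarrow> \<forall>s\<in>{0..1}. detn m (\<gamma> s) = 1"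
proof -
  have "detn m (fmat_mult m (local_matrix x \<Psi>) (local_matrix x \<Psi>')) = detn m fmat_one"
    by (rule detn_cong) (rule local_matrix_mult_inverse[OF x inv \<Psi> \<Psi>'])
  then have det: "detn m (local_matrix x \<Psi>) * detn m (local_matrix x \<Psi>') = 1"
    by (simp add: detn_fmat_mult)
  show ?thesis
  proof (cases "\<Psi> \<in> SL_pair S E p vadd smul \<phi>")
    case True
    then have "detn m (local_matrix x \<Psi>') = 1" using det detn_local_matrix_SL[OF x] by simp
    then show ?thesis
    proof (rule unimodular_matrix_path)
      fix \<gamma> :: "real \<Rightarrow> nat \<Rightarrow> nat \<Rightarrow> complex"
      assume "\<And>i j. continuous_on {0..1} (\<lambda>s. \<gamma> s i j)" "\<gamma> 0 = fmat_one" "\<gamma> 1 = local_matrix x \<Psi>'"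
        "\<And>s. s \<in> {0..1} \<Longrightarrow> detn m (\<gamma> s) = 1"
      then show ?thesis by (intro that[of \<gamma>]) auto
    qed
  next
    case False
    have "detn m (local_matrix x \<Psi>') \<noteq> 0" using det by auto
    then show ?thesis
    proof (rule invertible_matrix_path)
      fix \<gamma> :: "real \<Rightarrow> nat \<Rightarrow> nat \<Rightarrow> complex"
      assume "\<And>i j. continuous_on {0..1} (\<lambda>s. \<gamma> s i j)" "\<gamma> 0 = fmat_one" "\<gamma> 1 = local_matrix x \<Psi>'"
        "\<And>s. s \<in> {0..1} \<Longrightarrow> detn m (\<gamma> s) \<noteq> 0"
      then show ?thesis using False by (intro that[of \<gamma>]) auto
    qed
  qed
qed

lemma twist_outside_U:
  assumes "U0 \<subseteq> U" "e \<in> topspace E" "p e \<notin> U \<union> \<sigma> ` U"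
  shows "twist G t e = e"
proof (rule twist_outside_U0)
  show "p e \<notin> U0" using assms by blast
  show "\<sigma> (p e) \<notin> U0"
  proof
    assume "\<sigma> (p e) \<in> U0"
    then have "\<sigma> (\<sigma> (p e)) \<in> \<sigma> ` U" using assms(1) by blast
    then show False using assms(3) sigma_invol p_topspace[OF assms(2)] by simp
  qed
qed

lemma twisted_path:
  assumes x: "x \<in> U0" "f x = 1" and U: "U0 \<subseteq> U" and \<Psi>: "\<Psi> \<in> GL_pair E p vadd smul \<phi>"
    and G: "G = GL_pair E p vadd smul \<phi> \<or> G = SL_pair S E p vadd smul \<phi> \<and> \<Psi> \<in> G"
  shows "\<exists>\<Psi>t. bundle_path E G \<Psi>t \<and> (\<forall>e \<in> topspace E. \<Psi>t 0 e = \<Psi> e) \<and>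
    (\<forall>e \<in> fiber E p x. \<Psi>t 1 e = e) \<and>
    (\<forall>t \<in> {0..1}. \<forall>e \<in> topspace E. p e \<notin> U \<union> \<sigma> ` U \<longrightarrow> \<Psi>t t e = \<Psi> e)"
proof -
  obtain \<Psi>' where inv: "homeomorphic_maps E E \<Psi> \<Psi>'" and \<Psi>': "\<Psi>' \<in> GL_pair E p vadd smul \<phi>"
    using GL_pair_inverse[OF real_pair \<Psi>] .
  have x1: "x \<in> U1" using x U0_sub by auto
  show ?thesis
  proof (rule inverse_local_matrix_path[OF x1 inv \<Psi> \<Psi>'])
    fix \<gamma> :: "real \<Rightarrow> nat \<Rightarrow> nat \<Rightarrow> complex"
    assume \<gamma>_cont: "\<And>i j. continuous_on {0..1} (\<lambda>s. \<gamma> s i j)" and \<gamma>_0: "\<gamma> 0 = fmat_one"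
      and \<gamma>_1: "\<gamma> 1 = local_matrix x \<Psi>'" and \<gamma>_det: "\<And>s. s \<in> {0..1} \<Longrightarrow> detn m (\<gamma> s) \<noteq> 0"
      and \<gamma>_SL: "\<Psi> \<in> SL_pair S E p vadd smul \<phi> \<Longrightarrow> \<forall>s\<in>{0..1}. detn m (\<gamma> s) = 1"
    note homeo = homeomorphic_map_twist[OF \<gamma>_cont \<gamma>_0 \<gamma>_det]
    from G have "bundle_path E G (\<lambda>t e. \<Psi> (twist \<gamma> t e))"
    proof
      assume "G = GL_pair E p vadd smul \<phi>"
      then show ?thesis
        using \<Psi> twist_in_GL_pair[OF \<Psi> homeo] \<gamma>_cont \<gamma>_0 by (intro bundle_path_twist) auto
    next
      assume SL: "G = SL_pair S E p vadd smul \<phi> \<and> \<Psi> \<in> G"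
      then show ?thesis
        using twist_in_SL_pair[OF _ homeo] \<gamma>_SL \<gamma>_cont \<gamma>_0 by (intro bundle_path_twist) (auto simp: SL_pair_def)
    qed
    moreover have "\<Psi> (twist \<gamma> 1 e) = e" if "e \<in> fiber E p x" for e
    proof -
      have "twist \<gamma> 1 e = \<Psi>' e" using x \<Psi>' \<gamma>_1 that by (rule twist_at_center)
      then show ?thesis using inv that by (auto simp: homeomorphic_maps_def fiber_def)
    qed
    ultimately show ?thesis
      using twist_start[of _ \<gamma>] twist_outside_U[OF U] \<gamma>_0
      by (intro exI[of _ "\<lambda>t e. \<Psi> (twist \<gamma> t e)"]) auto
  qed
qed

end

lemma exists_trivialized_real_pair:
  assumes pair: "real_bundle_pair S \<sigma> E p vadd smul \<phi>"
    and \<sigma>: "continuous_map S S \<sigma>" "\<forall>y\<in>topspace S. \<sigma> (\<sigma> y) = y" and x: "x \<in> topspace S"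
  obtains U1 m h k where "trivialized_real_pair S \<sigma> E p vadd smul \<phi> U1 m h k" "x \<in> U1"
proof -
  have "\<forall>y\<in>topspace S. \<exists>U1 m h. openin S U1 \<and> y \<in> U1 \<and>
      homeomorphic_map (subtopology E {e \<in> topspace E. p e \<in> U1})
        (prod_topology (subtopology S U1) (top_of_set (fspace m))) h \<and>
      (\<forall>e\<in>topspace E. p e \<in> U1 \<longrightarrow> fst (h e) = p e) \<and>
      (\<forall>e\<in>topspace E. \<forall>e'\<in>topspace E. p e \<in> U1 \<and> p e = p e' \<longrightarrow>
        snd (h (vadd e e')) = (\<lambda>i. snd (h e) i + snd (h e') i)) \<and>
      (\<forall>e\<in>topspace E. \<forall>a. p e \<in> U1 \<longrightarrow> snd (h (smul a e)) = (\<lambda>i. a * snd (h e) i))"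
    using pair unfolding real_bundle_pair_def complex_vector_bundle_def by (elim conjE)
  from bspec[OF this x] obtain U1 m h where U1: "openin S U1" "x \<in> U1"
    and h: "homeomorphic_map (subtopology E {e \<in> topspace E. p e \<in> U1})
      (prod_topology (subtopology S U1) (top_of_set (fspace m))) h"
    and h_props: "\<forall>e\<in>topspace E. p e \<in> U1 \<longrightarrow> fst (h e) = p e"
      "\<forall>e\<in>topspace E. \<forall>e'\<in>topspace E. p e \<in> U1 \<and> p e = p e' \<longrightarrow>
        snd (h (vadd e e')) = (\<lambda>i. snd (h e) i + snd (h e') i)"
      "\<forall>e\<in>topspace E. \<forall>a. p e \<in> U1 \<longrightarrow> snd (h (smul a e)) = (\<lambda>i. a * snd (h e) i)"
    by (elim exE conjE) (rule that; assumption)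
  obtain k where "homeomorphic_maps (subtopology E {e \<in> topspace E. p e \<in> U1})
      (prod_topology (subtopology S U1) (top_of_set (fspace m))) h k"
    using h homeomorphic_map_maps by blast
  with pair \<sigma> U1 h_props show ?thesis
    by (intro that[of U1 m h k]) (simp_all add: trivialized_real_pair_def)
qed

context trivialized_real_pair
begin

text \<open>Urysohn's lemma gives \<open>f1 : S \<rightarrow> [0,1]\<close> equal to 1 at \<open>x\<close> and 0 off \<open>U0\<close>. The cut-off
  \<open>f = max 0 (2 f1 - 1)\<close> then vanishes on the open set \<open>W\<close> where \<open>f1\<close> and \<open>f1 \<circ> \<sigma>\<close> are below
  \<open>1/2\<close>.\<close>

lemma exists_twist_data:
  assumes S: "compact_space S" "Hausdorff_space S" and x: "x \<in> U1" "\<sigma> x \<noteq> x"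
    and U: "openin S U" "x \<in> U"
  obtains U0 W f where "twist_data S \<sigma> E p vadd smul \<phi> U1 m h k U0 W f" "x \<in> U0" "U0 \<subseteq> U" "f x = 1"
proof -
  have xS: "x \<in> topspace S" using x U1_topspace by auto
  obtain W1 W2 where W12: "openin S W1" "openin S W2" "x \<in> W1" "\<sigma> x \<in> W2" "disjnt W1 W2"
    using S(2) xS sigma_topspace[OF xS] x(2) unfolding Hausdorff_space_def by metis
  define U0 where "U0 = U \<inter> U1 \<inter> W1 \<inter> {y \<in> topspace S. \<sigma> y \<in> W2}"
  have U0_open: "openin S U0" unfolding U0_def
    by (intro openin_Int U(1) U1_open W12(1) openin_continuous_map_preimage[OF sigma_cont W12(2)])
  have x_U0: "x \<in> U0" using U(2) x(1) W12 xS by (auto simp: U0_def)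
  have U0_disjoint: "\<forall>y\<in>U0. \<sigma> y \<notin> U0" using W12(5) by (auto simp: U0_def disjnt_def)
  have "closedin S (topspace S - U0)" "closedin S {x}" "disjnt (topspace S - U0) {x}"
    using U0_open closedin_t1_singleton[OF Hausdorff_imp_t1_space[OF S(2)] xS] x_U0
    by (auto simp: closedin_diff disjnt_def)
  then obtain f1 :: "'a \<Rightarrow> real" where f1_cont: "continuous_map S (top_of_set {0..1}) f1"
    and f1_0: "f1 ` (topspace S - U0) \<subseteq> {0}" and f1_1: "f1 ` {x} \<subseteq> {1}"
    using Urysohn_lemma[OF compact_Hausdorff_or_regular_imp_normal_space] S zero_le_one by metis
  have f1_real: "continuous_map S euclideanreal f1" using continuous_map_into_fulltopology[OF f1_cont] .
  define f where "f y = max 0 (2 * f1 y - 1)" for y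
  have f_cont: "continuous_map S (top_of_set {0..1}) f"
  proof (rule continuous_map_into_subtopology)
    have "continuous_on {0..1} (\<lambda>u::real. max 0 (2 * u - 1))" by (intro continuous_intros)
    then show "continuous_map S euclideanreal f"
      unfolding f_def by (rule continuous_map_compose_continuous_on[OF f1_cont])
    show "f \<in> topspace S \<rightarrow> {0..1}"
      using continuous_map_image_subset_topspace[OF f1_cont] by (force simp: f_def)
  qed
  define W where "W = {y \<in> topspace S. f1 y \<in> {..<1/2}} \<inter> {y \<in> topspace S. f1 (\<sigma> y) \<in> {..<1/2}}"
  have W_open: "openin S W" unfolding W_def
    by (intro openin_Int openin_continuous_map_preimage[OF f1_real]
        openin_continuous_map_preimage[OF continuous_map_compose[OF sigma_cont f1_real],
          unfolded o_def]) auto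
  have "f1 y = 0" if "y \<in> topspace S" "y \<notin> U0" for y using f1_0 that by auto
  then have cover: "\<forall>y\<in>topspace S. y \<in> U0 \<or> \<sigma> y \<in> U0 \<or> y \<in> W"
    using sigma_topspace by (auto simp: W_def)
  have "twist_data S \<sigma> E p vadd smul \<phi> U1 m h k U0 W f"
    by unfold_locales (use U0_open U0_disjoint W_open cover f_cont in \<open>auto simp: U0_def W_def f_def\<close>)
  moreover have "f x = 1" using f1_1 by (simp add: f_def)
  ultimately show ?thesis using that x_U0 by (auto simp: U0_def)
qed

end

theorem lemma5p2:
  fixes S :: "'a topology" and ori :: "'a \<Rightarrow> 'a chain set" and \<sigma> :: "'a \<Rightarrow> 'a"
    and E :: "'b topology" and p :: "'b \<Rightarrow> 'a" and vadd :: "'b \<Rightarrow> 'b \<Rightarrow> 'b"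
    and smul :: "complex \<Rightarrow> 'b \<Rightarrow> 'b" and \<phi> :: "'b \<Rightarrow> 'b"
    and x :: 'a and U :: "'a set" and \<Psi> :: "'b \<Rightarrow> 'b"
  assumes "symmetric_surface S ori \<sigma>"
    and "real_bundle_pair S \<sigma> E p vadd smul \<phi>"
    and "x \<in> topspace S - fixed_locus S \<sigma>"
    and "openin S U" and "x \<in> U"
  shows "(\<Psi> \<in> SL_pair S E p vadd smul \<phi> \<longrightarrow>
            (\<exists>\<Psi>t. bundle_path E (SL_pair S E p vadd smul \<phi>) \<Psi>t \<and>
                (\<forall>e \<in> topspace E. \<Psi>t 0 e = \<Psi> e) \<and>
                (\<forall>e \<in> fiber E p x. \<Psi>t 1 e = e) \<and>
                (\<forall>t \<in> {0..1}. \<forall>e \<in> topspace E. p e \<notin> U \<union> \<sigma> ` U \<longrightarrow> \<Psi>t t e = \<Psi> e)))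
       \<and> (\<Psi> \<in> GL_pair E p vadd smul \<phi> \<longrightarrow>
            (\<exists>\<Psi>t. bundle_path E (GL_pair E p vadd smul \<phi>) \<Psi>t \<and>
                (\<forall>e \<in> topspace E. \<Psi>t 0 e = \<Psi> e) \<and>
                (\<forall>e \<in> fiber E p x. \<Psi>t 1 e = e) \<and>
                (\<forall>t \<in> {0..1}. \<forall>e \<in> topspace E. p e \<notin> U \<union> \<sigma> ` U \<longrightarrow> \<Psi>t t e = \<Psi> e)))"
proof -
  have S: "compact_space S" "Hausdorff_space S" "continuous_map S S \<sigma>" "\<forall>y\<in>topspace S. \<sigma> (\<sigma> y) = y"
    using assms(1) by (auto simp: symmetric_surface_def nodal_surface_def)
  have x: "x \<in> topspace S" "\<sigma> x \<noteq> x" using assms(3) by (auto simp: fixed_locus_def)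
  obtain U1 m h k where triv: "trivialized_real_pair S \<sigma> E p vadd smul \<phi> U1 m h k" "x \<in> U1"
    using exists_trivialized_real_pair[OF assms(2) S(3,4) x(1)] .
  obtain U0 W f where twist: "twist_data S \<sigma> E p vadd smul \<phi> U1 m h k U0 W f" "x \<in> U0" "U0 \<subseteq> U" "f x = 1"
    using trivialized_real_pair.exists_twist_data[OF triv(1) S(1,2) triv(2) x(2) assms(4,5)] .
  show ?thesis using twist_data.twisted_path[OF twist(1,2,4,3)] by (simp add: SL_pair_def)
qed

end
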